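(* Let $G$ be a group with subgroups $H,J$ such that $H\ne G$, $|J:H\cap J|=2$ and $|H:H\cap J|$ finite. Let $g\in J\setminus(H\cap J)$, $K=H\cap H^g$, $k=|H:K|$, $\lambda=|K:H\cap J|$, $L=\langle K,g\rangle$, and $\Gamma=\mathrm{Cos}(G,H,J)$. Then: (a) $\Gamma$ is a locally finite regular graph of valency $k$ and constant edge-multiplicity $\lambda$, and $\Gamma$ is connected if and only if $G=\langle H,J\rangle$; (b) the right multiplication action of $G$ on $V\cup E$ induces an arc-transitive group of automorphisms of $\Gamma$ isomorphic to $G/\mathrm{Core}_G(H\cap J)$, and the stabilisers in $G$ of the vertex $H$, the edge $J$ and the arc $(H,J,Hg)$ are $H$, $J$ and $K\cap J=H\cap J$ respectively; (c) $H\cap L=K$, $|L:K|=2$, $|L:J|=\lambda$, and $\mathrm{Cos}(G,H,L)$ is a locally finite simple graph isomorphic to $\mathrm{SimpCos}(G,H,HgH)$; (d) $\mathrm{Cos}(G,H,L)$ is isomorphic to the base graph of $\Gamma$, $\Gamma$ is a $(G,\lambda)$-extender of it, and $\Gamma$ is simple if and only if $L=J$.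
   Context: Graphs are triples $(V,E,\mathbf I)$, $\mathbf I\subseteq V\times E$, each edge incident with exactly two distinct vertices (multiple edges allowed). A graph is regular of valency $k$ with edge-multiplicity $\lambda$ if every vertex is adjacent to exactly $k$ vertices and every pair of adjacent vertices shares exactly $\lambda$ edges. The base graph is the simple graph on the same vertices with edges the pairs of adjacent vertices. The $\mu$-extender $\Gamma^{(\mu)}$ of a graph $\Gamma$ replaces each edge by $\mu$ edges with the same two end vertices; $\Gamma'$ is a $(G,\mu)$-extender of $\Gamma$ if $\Gamma'\cong\Gamma^{(\mu)}$ and both $\Gamma$ and $\Gamma'$ are $G$-arc-transitive. $\mathrm{Core}_G(X)=\bigcap_{g\in G}X^g$. $\mathrm{Cos}(G,H,J)$: vertices $\{Hx\}$, edges $\{Jy\}$, $Hx$ incident with $Jy$ iff $yx^{-1}\in JH$; $G$ acts by right multiplication. $\mathrm{SimpCos}(G,H,HgH)$: simple graph on $\{Hx\}$ with $\{Hx,Hy\}$ an edge iff $yx^{-1}\in HgH$. *)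

theory Defs
  imports "HOL-Algebra.Coset" "HOL-Algebra.Bij" "HOL-Algebra.Generated_Groups"
begin

section \<open>Graphs as triples (V, E, I) with I \<subseteq> V \<times> E (multiple edges allowed)\<close>

definition ends :: "('v \<times> 'e) set \<Rightarrow> 'e \<Rightarrow> 'v set" where
  "ends I e = {v. (v, e) \<in> I}"

definition is_graph :: "'v set \<Rightarrow> 'e set \<Rightarrow> ('v \<times> 'e) set \<Rightarrow> bool" where
  "is_graph V E I \<longleftrightarrow> I \<subseteq> V \<times> E \<and> (\<forall>e\<in>E. card (ends I e) = 2)"

definition adjacent :: "'v set \<Rightarrow> 'e set \<Rightarrow> ('v \<times> 'e) set \<Rightarrow> 'v \<Rightarrow> 'v \<Rightarrow> bool" where
  "adjacent V E I u v \<longleftrightarrow> u \<in> V \<and> v \<in> V \<and> u \<noteq> v \<and> (\<exists>e\<in>E. (u, e) \<in> I \<and> (v, e) \<in> I)"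

definition neighbours :: "'v set \<Rightarrow> 'e set \<Rightarrow> ('v \<times> 'e) set \<Rightarrow> 'v \<Rightarrow> 'v set" where
  "neighbours V E I u = {v. adjacent V E I u v}"

definition shared_edges :: "'e set \<Rightarrow> ('v \<times> 'e) set \<Rightarrow> 'v \<Rightarrow> 'v \<Rightarrow> 'e set" where
  "shared_edges E I u v = {e\<in>E. (u, e) \<in> I \<and> (v, e) \<in> I}"

definition locally_finite :: "'v set \<Rightarrow> 'e set \<Rightarrow> ('v \<times> 'e) set \<Rightarrow> bool" where
  "locally_finite V E I \<longleftrightarrow> (\<forall>v\<in>V. finite {e\<in>E. (v, e) \<in> I})"

definition regular_graph :: "'v set \<Rightarrow> 'e set \<Rightarrow> ('v \<times> 'e) set \<Rightarrow> nat \<Rightarrow> nat \<Rightarrow> bool" where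
  "regular_graph V E I k lam \<longleftrightarrow>
     (\<forall>v\<in>V. finite (neighbours V E I v) \<and> card (neighbours V E I v) = k) \<and>
     (\<forall>u v. adjacent V E I u v \<longrightarrow> finite (shared_edges E I u v) \<and> card (shared_edges E I u v) = lam)"

definition connected_graph :: "'v set \<Rightarrow> 'e set \<Rightarrow> ('v \<times> 'e) set \<Rightarrow> bool" where
  "connected_graph V E I \<longleftrightarrow>
     (\<forall>u\<in>V. \<forall>v\<in>V. (u, v) \<in> {(x, y). adjacent V E I x y}\<^sup>*)"

definition simple_graph :: "'v set \<Rightarrow> 'e set \<Rightarrow> ('v \<times> 'e) set \<Rightarrow> bool" where
  "simple_graph V E I \<longleftrightarrow> is_graph V E I \<and>
     (\<forall>e\<in>E. \<forall>e'\<in>E. ends I e = ends I e' \<longrightarrow> e = e')"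

definition graph_iso ::
  "'v set \<Rightarrow> 'e set \<Rightarrow> ('v \<times> 'e) set \<Rightarrow> 'w set \<Rightarrow> 'f set \<Rightarrow> ('w \<times> 'f) set \<Rightarrow> bool" where
  "graph_iso V E I V' E' I' \<longleftrightarrow>
     (\<exists>\<phi> \<psi>. bij_betw \<phi> V V' \<and> bij_betw \<psi> E E' \<and>
        (\<forall>v\<in>V. \<forall>e\<in>E. (v, e) \<in> I \<longleftrightarrow> (\<phi> v, \<psi> e) \<in> I'))"

text \<open>Base graph: simple graph on V whose edges are the pairs of adjacent vertices
  (an edge is the 2-set of its ends; incidence is membership).\<close>
definition base_E :: "'v set \<Rightarrow> 'e set \<Rightarrow> ('v \<times> 'e) set \<Rightarrow> 'v set set" where
  "base_E V E I = {{u, v} | u v. adjacent V E I u v}"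

definition base_I :: "'v set \<Rightarrow> 'e set \<Rightarrow> ('v \<times> 'e) set \<Rightarrow> ('v \<times> 'v set) set" where
  "base_I V E I = {(w, e). e \<in> base_E V E I \<and> w \<in> e}"

text \<open>mu-extender: every edge replaced by mu parallel copies (e, i), i < mu.\<close>
definition ext_E :: "'e set \<Rightarrow> nat \<Rightarrow> ('e \<times> nat) set" where
  "ext_E E mu = E \<times> {..<mu}"

definition ext_I :: "('v \<times> 'e) set \<Rightarrow> nat \<Rightarrow> ('v \<times> ('e \<times> nat)) set" where
  "ext_I I mu = {(v, (e, i)). (v, e) \<in> I \<and> i < mu}"

definition conj_set :: "('a, 'b) monoid_scheme \<Rightarrow> 'a set \<Rightarrow> 'a \<Rightarrow> 'a set" where
  "conj_set G X g = (m_inv G g) <#\<^bsub>G\<^esub> (X #>\<^bsub>G\<^esub> g)"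

definition core :: "('a, 'b) monoid_scheme \<Rightarrow> 'a set \<Rightarrow> 'a set" where
  "core G X = (\<Inter>g\<in>carrier G. conj_set G X g)"

text \<open>Index |A : B| of B in A (as a cardinal number; 0 if infinite).\<close>
definition idx :: "('a, 'b) monoid_scheme \<Rightarrow> 'a set \<Rightarrow> 'a set \<Rightarrow> nat" where
  "idx G A B = card (rcosets\<^bsub>G\<lparr>carrier := A\<rparr>\<^esub> B)"

definition Cos_V :: "('a, 'b) monoid_scheme \<Rightarrow> 'a set \<Rightarrow> 'a set set" where
  "Cos_V G H = rcosets\<^bsub>G\<^esub> H"

definition Cos_E :: "('a, 'b) monoid_scheme \<Rightarrow> 'a set \<Rightarrow> 'a set set" where
  "Cos_E G J = rcosets\<^bsub>G\<^esub> J"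

definition Cos_I :: "('a, 'b) monoid_scheme \<Rightarrow> 'a set \<Rightarrow> 'a set \<Rightarrow> ('a set \<times> 'a set) set" where
  "Cos_I G H J = {(A, B). \<exists>x\<in>carrier G. \<exists>y\<in>carrier G.
      A = (H #>\<^bsub>G\<^esub> x) \<and> B = (J #>\<^bsub>G\<^esub> y) \<and> y \<otimes>\<^bsub>G\<^esub> m_inv G x \<in> J <#>\<^bsub>G\<^esub> H}"

definition SimpCos_E :: "('a, 'b) monoid_scheme \<Rightarrow> 'a set \<Rightarrow> 'a \<Rightarrow> 'a set set set" where
  "SimpCos_E G H g = {{(H #>\<^bsub>G\<^esub> x), (H #>\<^bsub>G\<^esub> y)} | x y.
      x \<in> carrier G \<and> y \<in> carrier G \<and>
      y \<otimes>\<^bsub>G\<^esub> m_inv G x \<in> (H <#>\<^bsub>G\<^esub> {g}) <#>\<^bsub>G\<^esub> H}"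

definition SimpCos_I :: "('a, 'b) monoid_scheme \<Rightarrow> 'a set \<Rightarrow> 'a \<Rightarrow> ('a set \<times> 'a set set) set" where
  "SimpCos_I G H g = {(w, e). e \<in> SimpCos_E G H g \<and> w \<in> e}"

definition arcs :: "('v \<times> 'e) set \<Rightarrow> ('v \<times> 'e \<times> 'v) set" where
  "arcs I = {(u, e, v). (u, e) \<in> I \<and> (v, e) \<in> I \<and> u \<noteq> v}"

text \<open>A set S of permutations of V \<union> E (V, E sets of sets, both acted on by the same maps)
  is an arc-transitive group of automorphisms: each map is an automorphism, and S is
  transitive on arcs.\<close>
definition graph_aut :: "'v set \<Rightarrow> 'v set \<Rightarrow> ('v \<times> 'v) set \<Rightarrow> ('v \<Rightarrow> 'v) \<Rightarrow> bool" where
  "graph_aut V E I f \<longleftrightarrow> bij_betw f V V \<and> bij_betw f E E \<and>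
     (\<forall>v\<in>V. \<forall>e\<in>E. (v, e) \<in> I \<longleftrightarrow> (f v, f e) \<in> I)"

definition arc_transitive_on :: "'v set \<Rightarrow> 'v set \<Rightarrow> ('v \<times> 'v) set \<Rightarrow> ('v \<Rightarrow> 'v) set \<Rightarrow> bool" where
  "arc_transitive_on V E I S \<longleftrightarrow> (\<forall>f\<in>S. graph_aut V E I f) \<and>
     (\<forall>a\<in>arcs I. \<forall>b\<in>arcs I. \<exists>f\<in>S. (case a of (u, e, v) \<Rightarrow> (f u, f e, f v)) = b)"

definition rmult_perm :: "('a, 'b) monoid_scheme \<Rightarrow> 'a set set \<Rightarrow> 'a \<Rightarrow> ('a set \<Rightarrow> 'a set)" where
  "rmult_perm G S g = restrict (\<lambda>A. (A #>\<^bsub>G\<^esub> g)) S"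

definition G_arc_transitive :: "('a, 'b) monoid_scheme \<Rightarrow> 'a set set \<Rightarrow> 'a set set \<Rightarrow> ('a set \<times> 'a set) set \<Rightarrow> bool" where
  "G_arc_transitive G V E I \<longleftrightarrow> arc_transitive_on V E I (rmult_perm G (V \<union> E) ` carrier G)"

definition G_extender :: "('a, 'b) monoid_scheme \<Rightarrow> nat \<Rightarrow>
    'a set set \<Rightarrow> 'a set set \<Rightarrow> ('a set \<times> 'a set) set \<Rightarrow>
    'a set set \<Rightarrow> 'a set set \<Rightarrow> ('a set \<times> 'a set) set \<Rightarrow> bool" where
  "G_extender G mu V' E' I' V E I \<longleftrightarrow>
     graph_iso V' E' I' V (ext_E E mu) (ext_I I mu) \<and>
     G_arc_transitive G V E I \<and> G_arc_transitive G V' E' I'"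

end

theory Submission
  imports Defs
begin

text \<open>Since \<open>|J : H \<inter> J| = 2\<close>, the group \<open>J\<close> is contained in \<open>H \<union> Hg\<close>, so the edge \<open>Jy\<close>
  meets exactly the two vertices \<open>Hy\<close> and \<open>Hgy\<close>. The neighbours of \<open>Hx\<close> are the \<open>Hghx\<close>
  with \<open>h \<in> H\<close>, and \<open>Hgax = Hgbx\<close> iff \<open>Ka = Kb\<close>, which gives valency \<open>|H : K|\<close>.
  The subgroup \<open>L = \<langle>K, g\<rangle> = K \<union> Kg\<close> consists precisely of the \<open>l\<close> with
  \<open>{Hly, Hgly} = {Hy, Hgy}\<close>, so \<open>Cos(G,H,L)\<close> is the simple graph with edges \<open>{Hy, Hgy}\<close>:
  this is both \<open>SimpCos(G,H,HgH)\<close> and the base graph of \<open>\<Gamma>\<close>, and the parallel edges of \<open>\<Gamma>\<close>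
  over \<open>Ly\<close> are the \<open>|L : J| = |K : H \<inter> J|\<close> cosets of \<open>J\<close> inside \<open>Ly\<close>. Incidence is
  nonempty intersection of cosets, hence preserved by right multiplication, which is transitive
  on the arcs \<open>(Ht, Jt, Hgt)\<close> and acts on vertices and edges with kernel the core of \<open>H \<inter> J\<close>.\<close>

lemma (in group) inv_mult_cancel_left [simp]:
  "x \<in> carrier G \<Longrightarrow> y \<in> carrier G \<Longrightarrow> inv x \<otimes> (x \<otimes> y) = y"
  by (simp add: m_assoc [symmetric])

lemma (in group) mult_inv_cancel_left [simp]:
  "x \<in> carrier G \<Longrightarrow> y \<in> carrier G \<Longrightarrow> x \<otimes> (inv x \<otimes> y) = y"
  by (simp add: m_assoc [symmetric])

lemma (in group) rcos_eq_iff: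
  assumes "subgroup S G" "x \<in> carrier G" "y \<in> carrier G"
  shows "S #> x = S #> y \<longleftrightarrow> x \<otimes> inv y \<in> S"
proof
  assume "S #> x = S #> y"
  then have "x \<in> S #> y" using rcos_self[OF assms(2,1)] by simp
  then show "x \<otimes> inv y \<in> S" using subgroup.rcos_module_imp[OF assms(1) is_group assms(3)] by blast
next
  assume "x \<otimes> inv y \<in> S"
  then have "x \<in> S #> y" using subgroup.rcos_module_rev[OF assms(1) is_group assms(3,2)] by blast
  then show "S #> x = S #> y" using repr_independence[OF _ assms(3,1)] by simp
qed

lemma (in group) rcos_mult_cancel:
  assumes "subgroup S G" "x \<in> carrier G" "y \<in> carrier G" "a \<in> carrier G"
  shows "S #> (x \<otimes> a) = S #> (y \<otimes> a) \<longleftrightarrow> S #> x = S #> y"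
proof -
  have "(x \<otimes> a) \<otimes> inv (y \<otimes> a) = x \<otimes> inv y" using assms by (simp add: inv_mult_group m_assoc)
  then show ?thesis using rcos_eq_iff[OF assms(1)] assms by simp
qed

lemma (in group) rcos_stabiliser:
  assumes "subgroup S G"
  shows "{x \<in> carrier G. S #> x = S} = S"
  using coset_join1[OF _ _ assms] coset_join2[OF _ assms] subgroup.mem_carrier[OF assms] by blast

lemma (in group) rcos_Int_distrib:
  assumes "A \<subseteq> carrier G" "B \<subseteq> carrier G" "a \<in> carrier G"
  shows "(A #> a) \<inter> (B #> a) = (A \<inter> B) #> a"
proof
  show "(A #> a) \<inter> (B #> a) \<subseteq> (A \<inter> B) #> a"
  proof
    fix z assume "z \<in> (A #> a) \<inter> (B #> a)"
    then obtain x y where "x \<in> A" "y \<in> B" "z = x \<otimes> a" "z = y \<otimes> a"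
      unfolding r_coset_def by blast
    moreover have "x \<in> carrier G" "y \<in> carrier G" using assms \<open>x \<in> A\<close> \<open>y \<in> B\<close> by auto
    ultimately have "x = y" "z = x \<otimes> a" using assms(3) by simp_all
    with \<open>x \<in> A\<close> \<open>y \<in> B\<close> show "z \<in> (A \<inter> B) #> a" unfolding r_coset_def by blast
  qed
qed (auto simp: r_coset_def)

lemma (in group) mem_conj_set_iff:
  assumes "X \<subseteq> carrier G" "x \<in> carrier G"
  shows "z \<in> conj_set G X x \<longleftrightarrow> z \<in> carrier G \<and> x \<otimes> z \<otimes> inv x \<in> X"
proof
  assume "z \<in> conj_set G X x"
  then obtain h where "h \<in> X" "z = inv x \<otimes> (h \<otimes> x)"
    unfolding conj_set_def l_coset_def r_coset_def by blast
  then show "z \<in> carrier G \<and> x \<otimes> z \<otimes> inv x \<in> X"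
    using assms by (auto simp: m_assoc)
next
  assume z: "z \<in> carrier G \<and> x \<otimes> z \<otimes> inv x \<in> X"
  then have "z = inv x \<otimes> ((x \<otimes> z \<otimes> inv x) \<otimes> x)" using assms by (simp add: m_assoc)
  then show "z \<in> conj_set G X x"
    using z unfolding conj_set_def l_coset_def r_coset_def by blast
qed

lemma (in group) subgroup_mult_eq_if_subset:
  assumes "subgroup A G" "subgroup B G" "B \<subseteq> A"
  shows "A <#> B = A"
proof
  show "A <#> B \<subseteq> A"
    using subgroup_mult_id[OF assms(1)] mono_set_mult[OF order_refl assms(3)] by blast
  show "A \<subseteq> A <#> B"
    using subgroup.one_closed[OF assms(2)] subgroup.mem_carrier[OF assms(1)]
    unfolding set_mult_def by force
qed

lemma (in group) rcos_eq_mono: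
  assumes "subgroup A G" "subgroup B G" "A \<subseteq> B" "a \<in> carrier G" "b \<in> carrier G"
    and "A #> a = A #> b"
  shows "B #> a = B #> b"
  using rcos_eq_iff[OF assms(1,4,5)] rcos_eq_iff[OF assms(2,4,5)] assms(3,6) by blast

lemma rcosets_restrict_carrier: "rcosets\<^bsub>G\<lparr>carrier := A\<rparr>\<^esub> B = (\<lambda>a. B #>\<^bsub>G\<^esub> a) ` A"
  by (auto simp: RCOSETS_def r_coset_def)

lemma (in group) index_two_subset_Un_rcos:
  assumes "subgroup H G" "subgroup J G" "idx G J (H \<inter> J) = 2" "g \<in> J" "g \<notin> H"
  shows "J \<subseteq> H \<union> (H #> g)"
proof
  fix j assume j: "j \<in> J"
  have sHJ: "subgroup (H \<inter> J) G" using subgroups_Inter_pair[OF assms(1,2)] .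
  have gj: "g \<in> carrier G" "j \<in> carrier G" using assms(4) j subgroup.mem_carrier[OF assms(2)] by auto
  have HJ1: "(H \<inter> J) #> \<one> = H \<inter> J" using subgroup.subset[OF sHJ] by simp
  have "card ((\<lambda>a. (H \<inter> J) #> a) ` J) = 2"
    using assms(3) unfolding idx_def rcosets_restrict_carrier .
  then obtain P Q where PQ: "(\<lambda>a. (H \<inter> J) #> a) ` J = {P, Q}"
    unfolding card_2_iff by blast
  have "(H \<inter> J) #> \<one> \<in> {P, Q}" "(H \<inter> J) #> g \<in> {P, Q}" "(H \<inter> J) #> j \<in> {P, Q}"
    using subgroup.one_closed[OF assms(2)] assms(4) j unfolding PQ[symmetric] by blast+
  moreover have "(H \<inter> J) #> \<one> \<noteq> (H \<inter> J) #> g"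
  proof
    assume "(H \<inter> J) #> \<one> = (H \<inter> J) #> g"
    then have "g \<in> H \<inter> J" using rcos_self[OF gj(1) sHJ] HJ1 by simp
    then show False using assms(5) by blast
  qed
  ultimately have "(H \<inter> J) #> j = (H \<inter> J) #> \<one> \<or> (H \<inter> J) #> j = (H \<inter> J) #> g"
    by blast
  then show "j \<in> H \<union> (H #> g)"
  proof
    assume "(H \<inter> J) #> j = (H \<inter> J) #> \<one>"
    then show ?thesis using rcos_self[OF gj(2) sHJ] HJ1 by auto
  next
    assume "(H \<inter> J) #> j = (H \<inter> J) #> g"
    then have "j \<otimes> inv g \<in> H" using rcos_eq_iff[OF sHJ gj(2,1)] by simp
    then show ?thesis using subgroup.rcos_module[OF assms(1) is_group gj(1,2)] by simp
  qed
qed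

section \<open>Counting images through their fibres\<close>

lemma inv_into_image_mem:
  assumes "a \<in> S"
  shows "inv_into S \<phi> (\<phi> a) \<in> S" "\<phi> (inv_into S \<phi> (\<phi> a)) = \<phi> a"
proof -
  have "\<phi> a \<in> \<phi> ` S" using assms by (rule imageI)
  then show "inv_into S \<phi> (\<phi> a) \<in> S" "\<phi> (inv_into S \<phi> (\<phi> a)) = \<phi> a"
    by (rule inv_into_into, rule f_inv_into_f)
qed

lemma image_eq_image_inv_into:
  assumes "\<And>a b. a \<in> S \<Longrightarrow> b \<in> S \<Longrightarrow> \<phi> a = \<phi> b \<Longrightarrow> f a = f b"
  shows "f ` S = (f \<circ> inv_into S \<phi>) ` \<phi> ` S"
proof -
  have "f ` S = (\<lambda>a. (f \<circ> inv_into S \<phi>) (\<phi> a)) ` S"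
  proof (rule image_cong)
    fix a assume a: "a \<in> S"
    show "f a = (f \<circ> inv_into S \<phi>) (\<phi> a)"
      using assms[OF a inv_into_image_mem(1)[where \<phi>=\<phi>, OF a]] inv_into_image_mem(2)[where \<phi>=\<phi>, OF a] by simp
  qed simp
  then show ?thesis by (simp only: image_image)
qed

lemma bij_betw_image_inv_into:
  assumes "\<And>a b. a \<in> S \<Longrightarrow> b \<in> S \<Longrightarrow> f a = f b \<longleftrightarrow> \<phi> a = \<phi> b"
  shows "bij_betw (f \<circ> inv_into S \<phi>) (\<phi> ` S) (f ` S)"
proof (rule bij_betw_imageI)
  show "inj_on (f \<circ> inv_into S \<phi>) (\<phi> ` S)"
  proof (rule inj_onI)
    fix x y assume "x \<in> \<phi> ` S" "y \<in> \<phi> ` S"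
      and eq: "(f \<circ> inv_into S \<phi>) x = (f \<circ> inv_into S \<phi>) y"
    then obtain a b where ab: "a \<in> S" "b \<in> S" "x = \<phi> a" "y = \<phi> b" by blast
    have "\<phi> (inv_into S \<phi> (\<phi> a)) = \<phi> (inv_into S \<phi> (\<phi> b))"
      using eq ab assms[OF inv_into_image_mem(1)[where \<phi>=\<phi>, OF ab(1)] inv_into_image_mem(1)[where \<phi>=\<phi>, OF ab(2)]]
      by simp
    then show "x = y" using inv_into_image_mem(2)[where \<phi>=\<phi>] ab by simp
  qed
  show "(f \<circ> inv_into S \<phi>) ` \<phi> ` S = f ` S"
    using image_eq_image_inv_into[of S \<phi> f] assms by simp
qed

lemma card_image_eq_if_same_fibres:
  assumes "\<And>a b. a \<in> S \<Longrightarrow> b \<in> S \<Longrightarrow> f a = f b \<longleftrightarrow> \<phi> a = \<phi> b"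
  shows "card (f ` S) = card (\<phi> ` S)"
proof -
  have "bij_betw (f \<circ> inv_into S \<phi>) (\<phi> ` S) (f ` S)" by (rule bij_betw_image_inv_into) (rule assms)
  from bij_betw_same_card[OF this] show ?thesis by simp
qed

lemma finite_image_if_factors:
  assumes "\<And>a b. a \<in> S \<Longrightarrow> b \<in> S \<Longrightarrow> \<phi> a = \<phi> b \<Longrightarrow> f a = f b" "finite (\<phi> ` S)"
  shows "finite (f ` S)"
proof -
  have "f ` S = (f \<circ> inv_into S \<phi>) ` \<phi> ` S" by (rule image_eq_image_inv_into) (rule assms(1))
  then show ?thesis using assms(2) by simp
qed

lemma bij_betw_times_lessThan_if_fibres:
  assumes "\<And>a. a \<in> A \<Longrightarrow> f a \<in> B"
    and "\<And>b. b \<in> B \<Longrightarrow> finite {a \<in> A. f a = b} \<and> card {a \<in> A. f a = b} = n"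
  obtains \<phi> where "bij_betw \<phi> A (B \<times> {..<n})" "\<And>a. a \<in> A \<Longrightarrow> fst (\<phi> a) = f a"
proof -
  define fibre where "fibre b = {a \<in> A. f a = b}" for b
  have "\<exists>e. bij_betw e (fibre b) {..<n}" if "b \<in> B" for b
    using ex_bij_betw_finite_nat[of "fibre b"] assms(2)[OF that]
    unfolding fibre_def by (auto simp: atLeast0LessThan)
  then obtain e where e: "\<And>b. b \<in> B \<Longrightarrow> bij_betw (e b) (fibre b) {..<n}" by metis
  define \<phi> where "\<phi> a = (f a, e (f a) a)" for a
  have "bij_betw \<phi> A (B \<times> {..<n})"
  proof (rule bij_betw_imageI)
    show "inj_on \<phi> A"
    proof (rule inj_onI)
      fix a a' assume a: "a \<in> A" "a' \<in> A" "\<phi> a = \<phi> a'"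
      then have pair: "(f a, e (f a) a) = (f a', e (f a') a')" by (simp only: \<phi>_def)
      have "f a = f a'" using arg_cong[OF pair, of fst] by (simp only: fst_conv)
      moreover have "e (f a) a = e (f a') a'" using arg_cong[OF pair, of snd] by (simp only: snd_conv)
      moreover have "a \<in> fibre (f a)" "a' \<in> fibre (f a)" using a \<open>f a = f a'\<close> by (simp_all add: fibre_def)
      ultimately show "a = a'"
        using bij_betw_imp_inj_on[OF e[OF assms(1)[OF a(1)]]] by (simp add: inj_on_def)
    qed
    show "\<phi> ` A = B \<times> {..<n}"
    proof
      show "\<phi> ` A \<subseteq> B \<times> {..<n}"
      proof (rule image_subsetI)
        fix a assume "a \<in> A"
        then have "a \<in> fibre (f a)" "f a \<in> B" using assms(1) by (simp_all add: fibre_def)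
        then show "\<phi> a \<in> B \<times> {..<n}" using bij_betw_apply[OF e] by (simp add: \<phi>_def)
      qed
      show "B \<times> {..<n} \<subseteq> \<phi> ` A"
      proof (clarify)
        fix b i assume "b \<in> B" "i < n"
        then obtain a where "a \<in> fibre b" "i = e b a"
          using e[of b] unfolding bij_betw_def by (metis imageE lessThan_iff)
        then have "a \<in> A" "(b, i) = \<phi> a" by (simp_all add: fibre_def \<phi>_def)
        then show "(b, i) \<in> \<phi> ` A" by blast
      qed
    qed
  qed
  moreover have "fst (\<phi> a) = f a" for a by (simp add: \<phi>_def)
  ultimately show ?thesis using that by blast
qed

section \<open>Coset graphs\<close>

lemma graph_aut_adjacent:
  assumes f: "graph_aut V E I f" and adj: "adjacent V E I u v"
  shows "adjacent V E I (f u) (f v)"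
proof -
  obtain e where uv: "u \<in> V" "v \<in> V" "u \<noteq> v" "e \<in> E" "(u, e) \<in> I" "(v, e) \<in> I"
    using adj unfolding adjacent_def by blast
  have bV: "bij_betw f V V" and bE: "bij_betw f E E"
    and inc: "\<And>v e. v \<in> V \<Longrightarrow> e \<in> E \<Longrightarrow> (v, e) \<in> I \<longleftrightarrow> (f v, f e) \<in> I"
    using f unfolding graph_aut_def by blast+
  have "f u \<noteq> f v" using uv(1-3) bij_betw_imp_inj_on[OF bV] unfolding inj_on_def by blast
  moreover have "f u \<in> V" "f v \<in> V" "f e \<in> E"
    using uv bij_betw_apply[OF bV] bij_betw_apply[OF bE] by blast+
  moreover have "(f u, f e) \<in> I" "(f v, f e) \<in> I" using uv inc by blast+
  ultimately show ?thesis unfolding adjacent_def by blast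
qed

lemma graph_iso_ends_if_simple:
  assumes "simple_graph V E I"
  shows "graph_iso V E I V (ends I ` E) {(w, e). e \<in> ends I ` E \<and> w \<in> e}"
  unfolding graph_iso_def
proof (intro exI conjI)
  show "bij_betw id V V" by simp
  show "bij_betw (ends I) E (ends I ` E)"
    using assms unfolding simple_graph_def bij_betw_def inj_on_def by blast
  show "\<forall>v\<in>V. \<forall>e\<in>E. (v, e) \<in> I \<longleftrightarrow> (id v, ends I e) \<in> {(w, e). e \<in> ends I ` E \<and> w \<in> e}"
    by (auto simp: ends_def)
qed

locale coset_graph = group G + H: subgroup H G + J: subgroup J G
  for G (structure) and H J
begin

abbreviation "VE \<equiv> Cos_V G H \<union> Cos_E G J"

lemma Cos_V_iff: "A \<in> Cos_V G H \<longleftrightarrow> (\<exists>x\<in>carrier G. A = H #> x)"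
  unfolding Cos_V_def RCOSETS_def by blast

lemma Cos_E_iff: "B \<in> Cos_E G J \<longleftrightarrow> (\<exists>y\<in>carrier G. B = J #> y)"
  unfolding Cos_E_def RCOSETS_def by blast

lemma rcos_in_Cos_V: "x \<in> carrier G \<Longrightarrow> H #> x \<in> Cos_V G H"
  using Cos_V_iff by blast

lemma rcos_in_Cos_E: "y \<in> carrier G \<Longrightarrow> J #> y \<in> Cos_E G J"
  using Cos_E_iff by blast

lemma rcos_inter_nonempty_iff:
  assumes x: "x \<in> carrier G" and y: "y \<in> carrier G"
  shows "(H #> x) \<inter> (J #> y) \<noteq> {} \<longleftrightarrow> y \<otimes> inv x \<in> J <#> H"
proof
  assume "(H #> x) \<inter> (J #> y) \<noteq> {}"
  then obtain h j where hj: "h \<in> H" "j \<in> J" "h \<otimes> x = j \<otimes> y" unfolding r_coset_def by blast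
  have "y \<otimes> inv x = inv j \<otimes> (j \<otimes> y) \<otimes> inv x" using hj(2) x y by simp
  also have "\<dots> = inv j \<otimes> (h \<otimes> x) \<otimes> inv x" using hj(3) by simp
  also have "\<dots> = inv j \<otimes> h" using hj(1,2) x by (simp add: m_assoc)
  finally show "y \<otimes> inv x \<in> J <#> H" unfolding set_mult_def using hj by blast
next
  assume "y \<otimes> inv x \<in> J <#> H"
  then obtain j h where hj: "j \<in> J" "h \<in> H" "y \<otimes> inv x = j \<otimes> h" unfolding set_mult_def by blast
  have "y = (y \<otimes> inv x) \<otimes> x" using x y by (simp add: m_assoc)
  with hj(3) have "y = j \<otimes> h \<otimes> x" by simp
  then have "inv j \<otimes> y = h \<otimes> x" using hj(1,2) x by (simp add: m_assoc)
  then have "inv j \<otimes> y \<in> (H #> x) \<inter> (J #> y)"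
    unfolding r_coset_def using hj by blast
  then show "(H #> x) \<inter> (J #> y) \<noteq> {}" by blast
qed

lemma incident_iff_inter:
  "(A, B) \<in> Cos_I G H J \<longleftrightarrow> A \<in> Cos_V G H \<and> B \<in> Cos_E G J \<and> A \<inter> B \<noteq> {}"
proof
  assume "(A, B) \<in> Cos_I G H J"
  then obtain x y where "x \<in> carrier G" "y \<in> carrier G" "A = H #> x" "B = J #> y"
    "y \<otimes> inv x \<in> J <#> H" unfolding Cos_I_def by blast
  then show "A \<in> Cos_V G H \<and> B \<in> Cos_E G J \<and> A \<inter> B \<noteq> {}"
    using rcos_inter_nonempty_iff rcos_in_Cos_V rcos_in_Cos_E by simp
next
  assume AB: "A \<in> Cos_V G H \<and> B \<in> Cos_E G J \<and> A \<inter> B \<noteq> {}"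
  then obtain x y where "x \<in> carrier G" "y \<in> carrier G" "A = H #> x" "B = J #> y"
    unfolding Cos_V_iff Cos_E_iff by blast
  with AB show "(A, B) \<in> Cos_I G H J"
    unfolding Cos_I_def using rcos_inter_nonempty_iff by blast
qed

lemma rcos_incident_iff:
  "x \<in> carrier G \<Longrightarrow> y \<in> carrier G \<Longrightarrow> (H #> x, J #> y) \<in> Cos_I G H J \<longleftrightarrow> (H #> x) \<inter> (J #> y) \<noteq> {}"
  by (simp add: incident_iff_inter rcos_in_Cos_V rcos_in_Cos_E)

lemma VE_subset_carrier: "A \<in> VE \<Longrightarrow> A \<subseteq> carrier G"
proof (elim UnE)
  assume "A \<in> Cos_V G H"
  then obtain x where "x \<in> carrier G" "A = H #> x" unfolding Cos_V_iff by blast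
  then show ?thesis using r_coset_subset_G[OF H.subset] by simp
next
  assume "A \<in> Cos_E G J"
  then obtain y where "y \<in> carrier G" "A = J #> y" unfolding Cos_E_iff by blast
  then show ?thesis using r_coset_subset_G[OF J.subset] by simp
qed

lemma Cos_V_rcos_closed: "A \<in> Cos_V G H \<Longrightarrow> a \<in> carrier G \<Longrightarrow> A #> a \<in> Cos_V G H"
proof -
  assume "A \<in> Cos_V G H" and a: "a \<in> carrier G"
  then obtain x where x: "x \<in> carrier G" "A = H #> x" unfolding Cos_V_iff by blast
  then have "A #> a = H #> (x \<otimes> a)" using coset_mult_assoc[OF H.subset x(1) a] by simp
  then show ?thesis using rcos_in_Cos_V x a by simp
qed

lemma Cos_E_rcos_closed: "B \<in> Cos_E G J \<Longrightarrow> a \<in> carrier G \<Longrightarrow> B #> a \<in> Cos_E G J"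
proof -
  assume "B \<in> Cos_E G J" and a: "a \<in> carrier G"
  then obtain y where y: "y \<in> carrier G" "B = J #> y" unfolding Cos_E_iff by blast
  then have "B #> a = J #> (y \<otimes> a)" using coset_mult_assoc[OF J.subset y(1) a] by simp
  then show ?thesis using rcos_in_Cos_E y a by simp
qed

lemma rcos_rcos_inv: "A \<in> VE \<Longrightarrow> a \<in> carrier G \<Longrightarrow> (A #> a) #> inv a = A"
  using VE_subset_carrier by (simp add: coset_mult_assoc)

lemma bij_betw_rcos:
  assumes "\<And>A. A \<in> S \<Longrightarrow> A \<in> VE" "\<And>A b. A \<in> S \<Longrightarrow> b \<in> carrier G \<Longrightarrow> A #> b \<in> S"
    and a: "a \<in> carrier G"
  shows "bij_betw (\<lambda>A. A #> a) S S"
proof (rule bij_betw_byWitness[where f' = "\<lambda>A. A #> inv a"])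
  show "\<forall>A\<in>S. A #> a #> inv a = A" using assms rcos_rcos_inv by blast
  show "\<forall>A\<in>S. A #> inv a #> a = A"
    using assms rcos_rcos_inv[of _ "inv a"] by (metis inv_closed inv_inv)
qed (use assms in auto)

lemma rmult_perm_apply: "A \<in> VE \<Longrightarrow> rmult_perm G VE a A = A #> a"
  unfolding rmult_perm_def by simp

lemma rmult_perm_graph_aut:
  assumes a: "a \<in> carrier G"
  shows "graph_aut (Cos_V G H) (Cos_E G J) (Cos_I G H J) (rmult_perm G VE a)"
  unfolding graph_aut_def
proof (intro conjI ballI)
  show "bij_betw (rmult_perm G VE a) (Cos_V G H) (Cos_V G H)"
    using bij_betw_rcos[of "Cos_V G H", OF _ Cos_V_rcos_closed a]
    by (rule bij_betw_cong[THEN iffD1, rotated]) (auto simp: rmult_perm_apply)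
  show "bij_betw (rmult_perm G VE a) (Cos_E G J) (Cos_E G J)"
    using bij_betw_rcos[of "Cos_E G J", OF _ Cos_E_rcos_closed a]
    by (rule bij_betw_cong[THEN iffD1, rotated]) (auto simp: rmult_perm_apply)
  fix v e assume v: "v \<in> Cos_V G H" and e: "e \<in> Cos_E G J"
  have "(v #> a) \<inter> (e #> a) = (v \<inter> e) #> a"
    using rcos_Int_distrib VE_subset_carrier v e a by blast
  moreover have "(v \<inter> e) #> a = {} \<longleftrightarrow> v \<inter> e = {}" unfolding r_coset_def by blast
  ultimately show "(v, e) \<in> Cos_I G H J \<longleftrightarrow> (rmult_perm G VE a v, rmult_perm G VE a e) \<in> Cos_I G H J"
    using v e a Cos_V_rcos_closed Cos_E_rcos_closed by (simp add: incident_iff_inter rmult_perm_apply)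
qed

lemma rmult_perm_Bij: "a \<in> carrier G \<Longrightarrow> rmult_perm G VE a \<in> Bij VE"
proof -
  assume a: "a \<in> carrier G"
  have "bij_betw (\<lambda>A. A #> a) VE VE"
    using Cos_V_rcos_closed Cos_E_rcos_closed by (intro bij_betw_rcos a) auto
  then have "bij_betw (rmult_perm G VE a) VE VE"
    by (rule bij_betw_cong[THEN iffD1, rotated]) (simp add: rmult_perm_apply)
  then show ?thesis unfolding Bij_def rmult_perm_def by simp
qed

lemma rmult_perm_mult:
  assumes a: "a \<in> carrier G" and b: "b \<in> carrier G"
  shows "rmult_perm G VE a \<otimes>\<^bsub>BijGroup VE\<^esub> rmult_perm G VE b = rmult_perm G VE (b \<otimes> a)"
proof -
  have "rmult_perm G VE a \<otimes>\<^bsub>BijGroup VE\<^esub> rmult_perm G VE b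
      = compose VE (rmult_perm G VE a) (rmult_perm G VE b)"
    using rmult_perm_Bij[OF a] rmult_perm_Bij[OF b] unfolding BijGroup_def by simp
  also have "\<dots> = rmult_perm G VE (b \<otimes> a)" unfolding compose_def rmult_perm_def
  proof (rule restrict_ext)
    fix A assume A: "A \<in> VE"
    then have "A #> b \<in> VE" using Cos_V_rcos_closed Cos_E_rcos_closed b by blast
    then show "restrict (\<lambda>A. A #> a) VE (restrict (\<lambda>A. A #> b) VE A) = A #> (b \<otimes> a)"
      using A VE_subset_carrier[OF A] a b by (simp add: coset_mult_assoc)
  qed
  finally show ?thesis .
qed

text \<open>Right multiplication is an anti-homomorphism into \<open>BijGroup\<close>, whose product is
  composition; inverting the argument makes it a homomorphism.\<close>

lemma rmult_perm_inv_hom: "(\<lambda>a. rmult_perm G VE (inv a)) \<in> hom G (BijGroup VE)"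
  unfolding hom_def
  using rmult_perm_Bij rmult_perm_mult by (simp add: BijGroup_def inv_mult_group)

lemma image_rmult_perm_inv: "(\<lambda>a. rmult_perm G VE (inv a)) ` carrier G = rmult_perm G VE ` carrier G"
proof
  show "rmult_perm G VE ` carrier G \<subseteq> (\<lambda>a. rmult_perm G VE (inv a)) ` carrier G"
  proof (rule image_subsetI)
    fix a assume "a \<in> carrier G"
    then show "rmult_perm G VE a \<in> (\<lambda>a. rmult_perm G VE (inv a)) ` carrier G"
      by (intro image_eqI[of _ _ "inv a"]) simp_all
  qed
qed auto

lemma subgroup_rmult_perms: "subgroup (rmult_perm G VE ` carrier G) (BijGroup VE)"
proof -
  have "group_hom G (BijGroup VE) (\<lambda>a. rmult_perm G VE (inv a))"
    using group_BijGroup rmult_perm_inv_hom by (simp add: group_hom_def group_hom_axioms_def is_group)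
  moreover have "(\<lambda>a. rmult_perm G VE (inv a)) ` carrier G = rmult_perm G VE ` carrier G"
    by (rule image_rmult_perm_inv)
  ultimately show ?thesis using group_hom.img_is_subgroup by metis
qed

lemma mem_core_iff:
  "a \<in> core G (H \<inter> J) \<longleftrightarrow> a \<in> carrier G \<and> (\<forall>x\<in>carrier G. x \<otimes> a \<otimes> inv x \<in> H \<inter> J)"
proof -
  have "H \<inter> J \<subseteq> carrier G" using H.subset by blast
  then have "a \<in> core G (H \<inter> J) \<longleftrightarrow> (\<forall>x\<in>carrier G. a \<in> carrier G \<and> x \<otimes> a \<otimes> inv x \<in> H \<inter> J)"
    unfolding core_def using mem_conj_set_iff by simp
  then show ?thesis by auto
qed

lemma fixes_VE_iff_mem_core:
  assumes a: "a \<in> carrier G"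
  shows "(\<forall>A\<in>VE. A #> a = A) \<longleftrightarrow> a \<in> core G (H \<inter> J)"
proof -
  have fix_iff: "H #> x #> a = H #> x \<and> J #> x #> a = J #> x \<longleftrightarrow> x \<otimes> a \<otimes> inv x \<in> H \<inter> J"
    if x: "x \<in> carrier G" for x
    using coset_mult_assoc[OF H.subset x a] coset_mult_assoc[OF J.subset x a]
      rcos_eq_iff[OF H.subgroup_axioms m_closed[OF x a] x]
      rcos_eq_iff[OF J.subgroup_axioms m_closed[OF x a] x] by simp
  have "(\<forall>A\<in>VE. A #> a = A) \<longleftrightarrow> (\<forall>x\<in>carrier G. H #> x #> a = H #> x \<and> J #> x #> a = J #> x)"
  proof
    assume fixed: "\<forall>A\<in>VE. A #> a = A"
    show "\<forall>x\<in>carrier G. H #> x #> a = H #> x \<and> J #> x #> a = J #> x"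
    proof (intro ballI conjI)
      fix x assume x: "x \<in> carrier G"
      show "H #> x #> a = H #> x" using fixed rcos_in_Cos_V[OF x] by blast
      show "J #> x #> a = J #> x" using fixed rcos_in_Cos_E[OF x] by blast
    qed
  next
    assume fixed: "\<forall>x\<in>carrier G. H #> x #> a = H #> x \<and> J #> x #> a = J #> x"
    show "\<forall>A\<in>VE. A #> a = A"
    proof
      fix A assume "A \<in> VE"
      then obtain x where "x \<in> carrier G" "A = H #> x \<or> A = J #> x"
        unfolding Un_iff Cos_V_iff Cos_E_iff by blast
      with fixed show "A #> a = A" by auto
    qed
  qed
  also have "\<dots> \<longleftrightarrow> (\<forall>x\<in>carrier G. x \<otimes> a \<otimes> inv x \<in> H \<inter> J)" by (simp add: fix_iff)
  finally show ?thesis using mem_core_iff a by simp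
qed

lemma fixes_VE_inv_iff:
  assumes a: "a \<in> carrier G"
  shows "(\<forall>A\<in>VE. A #> inv a = A) \<longleftrightarrow> (\<forall>A\<in>VE. A #> a = A)"
proof (intro iffI ballI)
  fix A assume fixed: "\<forall>A\<in>VE. A #> inv a = A" and A: "A \<in> VE"
  have "A #> inv a = A" using fixed A by blast
  then have "A #> a = (A #> inv a) #> inv (inv a)" using a by simp
  also have "\<dots> = A" using rcos_rcos_inv[OF A, of "inv a"] a by simp
  finally show "A #> a = A" .
next
  fix A assume fixed: "\<forall>A\<in>VE. A #> a = A" and A: "A \<in> VE"
  have "A #> inv a = (A #> a) #> inv a" using fixed A by simp
  also have "\<dots> = A" using rcos_rcos_inv[OF A a] .
  finally show "A #> inv a = A" .
qed

lemma rmult_perm_eq_id_iff: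
  "rmult_perm G VE a = (\<lambda>A\<in>VE. A) \<longleftrightarrow> (\<forall>A\<in>VE. A #> a = A)"
proof
  assume id: "rmult_perm G VE a = (\<lambda>A\<in>VE. A)"
  show "\<forall>A\<in>VE. A #> a = A"
  proof
    fix A assume A: "A \<in> VE"
    have "A #> a = rmult_perm G VE a A" using rmult_perm_apply[OF A] by simp
    then show "A #> a = A" using id A by simp
  qed
next
  assume "\<forall>A\<in>VE. A #> a = A"
  then show "rmult_perm G VE a = (\<lambda>A\<in>VE. A)" unfolding rmult_perm_def by (intro restrict_ext) simp
qed

lemma rmult_perms_iso_quotient:
  "(BijGroup VE)\<lparr>carrier := rmult_perm G VE ` carrier G\<rparr> \<cong> G Mod core G (H \<inter> J)"
proof -
  let ?P = "(BijGroup VE)\<lparr>carrier := rmult_perm G VE ` carrier G\<rparr>"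
  let ?\<rho> = "\<lambda>a. rmult_perm G VE (inv a)"
  have "?\<rho> \<in> hom G ?P"
  proof (rule homI)
    show "?\<rho> a \<in> carrier ?P" if "a \<in> carrier G" for a
      using that image_rmult_perm_inv by auto
    show "?\<rho> (a \<otimes> b) = ?\<rho> a \<otimes>\<^bsub>?P\<^esub> ?\<rho> b" if "a \<in> carrier G" "b \<in> carrier G" for a b
      using hom_mult[OF rmult_perm_inv_hom that] by simp
  qed
  then have hom: "group_hom G ?P ?\<rho>"
    using subgroup.subgroup_is_group[OF subgroup_rmult_perms group_BijGroup]
    by (simp add: group_hom_def group_hom_axioms_def is_group)
  have "kernel G ?P ?\<rho> = core G (H \<inter> J)"
  proof (rule Set.set_eqI)
    fix a
    have "a \<in> kernel G ?P ?\<rho> \<longleftrightarrow> a \<in> carrier G \<and> (\<forall>A\<in>VE. A #> inv a = A)"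
      unfolding kernel_def by (simp add: BijGroup_def rmult_perm_eq_id_iff)
    also have "\<dots> \<longleftrightarrow> a \<in> core G (H \<inter> J)"
    proof (cases "a \<in> carrier G")
      case True
      then show ?thesis using fixes_VE_inv_iff[OF True] fixes_VE_iff_mem_core[OF True] by simp
    qed (simp add: mem_core_iff)
    finally show "a \<in> kernel G ?P ?\<rho> \<longleftrightarrow> a \<in> core G (H \<inter> J)" .
  qed
  then have "G Mod core G (H \<inter> J) \<cong> ?P"
    using group_hom.FactGroup_iso[OF hom] image_rmult_perm_inv by simp
  moreover have "group (G Mod core G (H \<inter> J))"
    using normal.factorgroup_is_group[OF group_hom.normal_kernel[OF hom]] \<open>kernel G ?P ?\<rho> = _\<close> by simp
  ultimately show ?thesis using group.iso_sym by blast
qed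

abbreviation "Adj \<equiv> {(u, v). adjacent (Cos_V G H) (Cos_E G J) (Cos_I G H J) u v}"

lemma adjacent_rcos:
  assumes "adjacent (Cos_V G H) (Cos_E G J) (Cos_I G H J) u v" "a \<in> carrier G"
  shows "adjacent (Cos_V G H) (Cos_E G J) (Cos_I G H J) (u #> a) (v #> a)"
proof -
  have "u \<in> VE" "v \<in> VE" using assms(1) unfolding adjacent_def by blast+
  then show ?thesis
    using graph_aut_adjacent[OF rmult_perm_graph_aut[OF assms(2)] assms(1)] by (simp add: rmult_perm_apply)
qed

lemma reachable_rcos: "(u, v) \<in> Adj\<^sup>* \<Longrightarrow> a \<in> carrier G \<Longrightarrow> (u #> a, v #> a) \<in> Adj\<^sup>*"
proof (induction rule: rtrancl_induct)
  case (step v w)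
  then have "(v #> a, w #> a) \<in> Adj" using adjacent_rcos by simp
  with step show ?case by (simp add: rtrancl_into_rtrancl)
qed simp

lemma reachable_sym: "(u, v) \<in> Adj\<^sup>* \<Longrightarrow> (v, u) \<in> Adj\<^sup>*"
proof (induction rule: rtrancl_induct)
  case (step v w)
  then have "(w, v) \<in> Adj" unfolding adjacent_def by blast
  with step show ?case by (simp add: converse_rtrancl_into_rtrancl)
qed simp

end

section \<open>Coset graphs whose edges have two ends\<close>

locale coset_graph_index2 = coset_graph +
  fixes g
  assumes g_in_J: "g \<in> J" and g_notin_H: "g \<notin> H"
    and J_subset: "J \<subseteq> H \<union> (H #> g)"
begin

lemma g_carrier [simp]: "g \<in> carrier G"
  using g_in_J by simp

lemma J_split: "j \<in> J \<Longrightarrow> j \<in> H \<or> j \<otimes> inv g \<in> H"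
  using J_subset H.rcos_module[OF is_group g_carrier] by auto

lemma sq_g_in_H: "g \<otimes> g \<in> H"
proof -
  have "g \<otimes> g \<otimes> inv g = g" by (simp add: m_assoc)
  then show ?thesis using J_split[of "g \<otimes> g"] g_in_J g_notin_H by auto
qed

lemma inv_g_notin_H: "inv g \<notin> H"
  using g_notin_H H.m_inv_closed by fastforce

lemma rcos_J_subset:
  assumes y: "y \<in> carrier G"
  shows "J #> y \<subseteq> (H #> y) \<union> (H #> (g \<otimes> y))"
proof
  fix z assume "z \<in> J #> y"
  then obtain j where j: "j \<in> J" "z = j \<otimes> y" unfolding r_coset_def by blast
  show "z \<in> (H #> y) \<union> (H #> (g \<otimes> y))"
  proof (cases "j \<in> H")
    case True
    then show ?thesis using j unfolding r_coset_def by blast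
  next
    case False
    then obtain h where "h \<in> H" "j = h \<otimes> g" using j J_subset unfolding r_coset_def by blast
    then have "h \<in> H" "z = h \<otimes> (g \<otimes> y)" using j y by (simp_all add: m_assoc)
    then show ?thesis unfolding r_coset_def by blast
  qed
qed

lemma rcos_incident_iff_eq:
  assumes x: "x \<in> carrier G" and y: "y \<in> carrier G"
  shows "(H #> x, J #> y) \<in> Cos_I G H J \<longleftrightarrow> H #> x = H #> y \<or> H #> x = H #> (g \<otimes> y)"
proof -
  have gy: "g \<otimes> y \<in> carrier G" using y by simp
  have meet: "H #> x = H #> w" if "z \<in> H #> x" "z \<in> H #> w" "w \<in> carrier G" for z w
    using repr_independence[OF that(1) x H.subgroup_axioms]
      repr_independence[OF that(2,3) H.subgroup_axioms] by simp
  have "(H #> x) \<inter> (J #> y) \<noteq> {} \<longleftrightarrow> H #> x = H #> y \<or> H #> x = H #> (g \<otimes> y)"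
  proof
    assume "(H #> x) \<inter> (J #> y) \<noteq> {}"
    then obtain z where "z \<in> H #> x" "z \<in> (H #> y) \<union> (H #> (g \<otimes> y))"
      using rcos_J_subset[OF y] by blast
    then show "H #> x = H #> y \<or> H #> x = H #> (g \<otimes> y)" using meet y gy by blast
  next
    have "y \<in> J #> y" "g \<otimes> y \<in> J #> y" "y \<in> H #> y" "g \<otimes> y \<in> H #> (g \<otimes> y)"
      using rcos_self[OF y] rcos_self[OF gy] J.subgroup_axioms H.subgroup_axioms g_in_J y
      unfolding r_coset_def by auto
    then show "H #> x = H #> y \<or> H #> x = H #> (g \<otimes> y) \<Longrightarrow> (H #> x) \<inter> (J #> y) \<noteq> {}"
      by blast
  qed
  then show ?thesis using rcos_incident_iff[OF x y] by simp
qed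

lemma rcos_ne_rcos_g: "y \<in> carrier G \<Longrightarrow> H #> y \<noteq> H #> (g \<otimes> y)"
  using rcos_eq_iff[OF H.subgroup_axioms, of y "g \<otimes> y"] inv_g_notin_H
  by (simp add: inv_mult_group m_assoc)

lemma ends_rcos:
  assumes y: "y \<in> carrier G"
  shows "ends (Cos_I G H J) (J #> y) = {H #> y, H #> (g \<otimes> y)}"
proof -
  have "v \<in> ends (Cos_I G H J) (J #> y) \<longleftrightarrow> v \<in> {H #> y, H #> (g \<otimes> y)}" for v
  proof
    assume "v \<in> ends (Cos_I G H J) (J #> y)"
    then have "(v, J #> y) \<in> Cos_I G H J" unfolding ends_def by simp
    moreover obtain x where "x \<in> carrier G" "v = H #> x"
      using calculation incident_iff_inter Cos_V_iff by blast
    ultimately show "v \<in> {H #> y, H #> (g \<otimes> y)}" using rcos_incident_iff_eq y by auto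
  next
    assume "v \<in> {H #> y, H #> (g \<otimes> y)}"
    then show "v \<in> ends (Cos_I G H J) (J #> y)"
      unfolding ends_def using rcos_incident_iff_eq y by auto
  qed
  then show ?thesis by blast
qed

lemma is_graph: "is_graph (Cos_V G H) (Cos_E G J) (Cos_I G H J)"
  unfolding is_graph_def
proof
  show "Cos_I G H J \<subseteq> Cos_V G H \<times> Cos_E G J" using incident_iff_inter by auto
  show "\<forall>e\<in>Cos_E G J. card (ends (Cos_I G H J) e) = 2"
  proof
    fix e assume "e \<in> Cos_E G J"
    then obtain y where "y \<in> carrier G" "e = J #> y" unfolding Cos_E_iff by blast
    then show "card (ends (Cos_I G H J) e) = 2" using ends_rcos rcos_ne_rcos_g by simp
  qed
qed

lemma adjacent_iff:
  "adjacent (Cos_V G H) (Cos_E G J) (Cos_I G H J) u v \<longleftrightarrow>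
     u \<noteq> v \<and> (\<exists>y\<in>carrier G. {u, v} = {H #> y, H #> (g \<otimes> y)})"
proof
  assume "adjacent (Cos_V G H) (Cos_E G J) (Cos_I G H J) u v"
  then obtain e where uv: "u \<noteq> v" "e \<in> Cos_E G J" "(u, e) \<in> Cos_I G H J" "(v, e) \<in> Cos_I G H J"
    unfolding adjacent_def by blast
  then obtain y where y: "y \<in> carrier G" "e = J #> y" unfolding Cos_E_iff by blast
  have "u \<in> {H #> y, H #> (g \<otimes> y)}" "v \<in> {H #> y, H #> (g \<otimes> y)}"
    using uv(3,4) ends_rcos[OF y(1)] unfolding y(2) ends_def by blast+
  then have "{u, v} = {H #> y, H #> (g \<otimes> y)}" using uv(1) by blast
  then show "u \<noteq> v \<and> (\<exists>y\<in>carrier G. {u, v} = {H #> y, H #> (g \<otimes> y)})" using uv(1) y(1) by blast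
next
  assume "u \<noteq> v \<and> (\<exists>y\<in>carrier G. {u, v} = {H #> y, H #> (g \<otimes> y)})"
  then obtain y where y: "u \<noteq> v" "y \<in> carrier G" "{u, v} = {H #> y, H #> (g \<otimes> y)}" by blast
  have "(u, J #> y) \<in> Cos_I G H J" "(v, J #> y) \<in> Cos_I G H J"
    using ends_rcos[OF y(2)] y(3) unfolding ends_def by blast+
  then show "adjacent (Cos_V G H) (Cos_E G J) (Cos_I G H J) u v"
    unfolding adjacent_def using incident_iff_inter y(1) by blast
qed

lemma adjacent_rcos_iff:
  assumes x: "x \<in> carrier G"
  shows "adjacent (Cos_V G H) (Cos_E G J) (Cos_I G H J) (H #> x) v \<longleftrightarrow> (\<exists>h\<in>H. v = H #> (g \<otimes> h \<otimes> x))"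
proof
  assume "adjacent (Cos_V G H) (Cos_E G J) (Cos_I G H J) (H #> x) v"
  then obtain y where y: "y \<in> carrier G" "{H #> x, v} = {H #> y, H #> (g \<otimes> y)}"
    unfolding adjacent_iff by blast
  then consider "H #> x = H #> y" "v = H #> (g \<otimes> y)" | "H #> x = H #> (g \<otimes> y)" "v = H #> y"
    by (auto simp: doubleton_eq_iff)
  then show "\<exists>h\<in>H. v = H #> (g \<otimes> h \<otimes> x)"
  proof cases
    case 1
    then have "y \<otimes> inv x \<in> H" using rcos_eq_iff[OF H.subgroup_axioms y(1) x] by simp
    moreover have "v = H #> (g \<otimes> (y \<otimes> inv x) \<otimes> x)" using 1 x y by (simp add: m_assoc)
    ultimately show ?thesis by blast
  next
    case 2
    then have "g \<otimes> y \<otimes> inv x \<in> H"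
      using rcos_eq_iff[OF H.subgroup_axioms m_closed[OF g_carrier y(1)] x] by simp
    then have "inv (g \<otimes> g) \<otimes> (g \<otimes> y \<otimes> inv x) \<in> H" using sq_g_in_H by simp
    moreover have "v = H #> (g \<otimes> (inv (g \<otimes> g) \<otimes> (g \<otimes> y \<otimes> inv x)) \<otimes> x)"
      using 2 x y by (simp add: m_assoc inv_mult_group)
    ultimately show ?thesis by blast
  qed
next
  assume "\<exists>h\<in>H. v = H #> (g \<otimes> h \<otimes> x)"
  then obtain h where h: "h \<in> H" "v = H #> (g \<otimes> (h \<otimes> x))" using x by (auto simp: m_assoc)
  have hx: "h \<otimes> x \<in> carrier G" using h x by simp
  have "H #> x = H #> (h \<otimes> x)"
    using rcos_eq_iff[OF H.subgroup_axioms x hx] h x by (simp add: inv_mult_group m_assoc)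
  then show "adjacent (Cos_V G H) (Cos_E G J) (Cos_I G H J) (H #> x) v"
    unfolding adjacent_iff using h rcos_ne_rcos_g[OF hx] hx by auto
qed

lemma neighbours_rcos:
  "x \<in> carrier G \<Longrightarrow>
     neighbours (Cos_V G H) (Cos_E G J) (Cos_I G H J) (H #> x) = (\<lambda>h. H #> (g \<otimes> h \<otimes> x)) ` H"
  unfolding neighbours_def by (auto simp: adjacent_rcos_iff)

lemma edges_at_rcos:
  assumes x: "x \<in> carrier G"
  shows "{e \<in> Cos_E G J. (H #> x, e) \<in> Cos_I G H J} \<subseteq> (\<lambda>h. J #> (h \<otimes> x)) ` H"
proof
  fix e assume "e \<in> {e \<in> Cos_E G J. (H #> x, e) \<in> Cos_I G H J}"
  then obtain y where y: "y \<in> carrier G" "e = J #> y" "(H #> x, J #> y) \<in> Cos_I G H J"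
    unfolding Cos_E_iff by blast
  have gy: "g \<otimes> y \<in> carrier G" using y by simp
  from y(3) consider "H #> x = H #> y" | "H #> x = H #> (g \<otimes> y)"
    using rcos_incident_iff_eq x y(1) by blast
  then obtain z where z: "z \<in> carrier G" "H #> x = H #> z" "J #> y = J #> z"
  proof cases
    case 1 then show thesis using that y(1) by blast
  next
    case 2
    have "J #> y = J #> (g \<otimes> y)"
      using rcos_eq_iff[OF J.subgroup_axioms y(1) gy] J.m_inv_closed[OF g_in_J] y(1)
      by (simp add: inv_mult_group m_assoc)
    then show thesis using that gy 2 by blast
  qed
  then have "z \<otimes> inv x \<in> H" "e = J #> ((z \<otimes> inv x) \<otimes> x)"
    using rcos_eq_iff[OF H.subgroup_axioms z(1) x] x y(2) by (simp_all add: m_assoc)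
  then show "e \<in> (\<lambda>h. J #> (h \<otimes> x)) ` H" by blast
qed

lemma locally_finite_if_finite_index:
  assumes fin: "finite ((\<lambda>h. J #> h) ` H)"
  shows "locally_finite (Cos_V G H) (Cos_E G J) (Cos_I G H J)"
  unfolding locally_finite_def
proof
  fix v assume "v \<in> Cos_V G H"
  then obtain x where x: "x \<in> carrier G" "v = H #> x" unfolding Cos_V_iff by blast
  have "J #> (a \<otimes> x) = J #> (b \<otimes> x)" if "a \<in> H" "b \<in> H" "J #> a = J #> b" for a b
    using rcos_mult_cancel[OF J.subgroup_axioms _ _ x(1), of a b] that by simp
  then have "finite ((\<lambda>h. J #> (h \<otimes> x)) ` H)"
    using finite_image_if_factors[where f = "\<lambda>h. J #> (h \<otimes> x)", OF _ fin] by blast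
  then show "finite {e \<in> Cos_E G J. (v, e) \<in> Cos_I G H J}"
    using edges_at_rcos[OF x(1)] x(2) finite_subset by simp
qed

lemma arc_eq_rcos:
  assumes "(u, e, v) \<in> arcs (Cos_I G H J)"
  obtains t where "t \<in> carrier G" "u = H #> t" "e = J #> t" "v = (H #> g) #> t"
proof -
  have uv: "(u, e) \<in> Cos_I G H J" "(v, e) \<in> Cos_I G H J" "u \<noteq> v"
    using assms unfolding arcs_def by auto
  then obtain y where y: "y \<in> carrier G" "e = J #> y" using incident_iff_inter Cos_E_iff by blast
  have gy: "g \<otimes> y \<in> carrier G" using y by simp
  have "u \<in> {H #> y, H #> (g \<otimes> y)}" "v \<in> {H #> y, H #> (g \<otimes> y)}"
    using uv ends_rcos[OF y(1)] unfolding y(2) ends_def by blast+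
  with uv(3) consider "u = H #> y" "v = H #> (g \<otimes> y)" | "u = H #> (g \<otimes> y)" "v = H #> y" by blast
  then show thesis
  proof cases
    case 1
    then show thesis using that[OF y(1)] y(2) coset_mult_assoc[OF H.subset g_carrier y(1)] by simp
  next
    case 2
    have "J #> (g \<otimes> y) = J #> y"
      using rcos_eq_iff[OF J.subgroup_axioms gy y(1)] g_in_J y(1) by (simp add: m_assoc)
    moreover have "(H #> g) #> (g \<otimes> y) = H #> y"
      using coset_mult_assoc[OF H.subset g_carrier gy] sq_g_in_H
        rcos_eq_iff[OF H.subgroup_axioms _ y(1), of "g \<otimes> (g \<otimes> y)"] y(1) by (simp add: m_assoc)
    ultimately show thesis using that[OF gy] 2 y(2) by simp
  qed
qed

lemma arc_transitive: "arc_transitive_on (Cos_V G H) (Cos_E G J) (Cos_I G H J) (rmult_perm G VE ` carrier G)"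
  unfolding arc_transitive_on_def
proof (intro conjI ballI)
  show "\<And>f. f \<in> rmult_perm G VE ` carrier G \<Longrightarrow> graph_aut (Cos_V G H) (Cos_E G J) (Cos_I G H J) f"
    using rmult_perm_graph_aut by blast
  fix a b assume a: "a \<in> arcs (Cos_I G H J)" and b: "b \<in> arcs (Cos_I G H J)"
  obtain u e v u' e' v' where ab: "a = (u, e, v)" "b = (u', e', v')" by (cases a, cases b) auto
  obtain t where t: "t \<in> carrier G" "u = H #> t" "e = J #> t" "v = (H #> g) #> t"
    using arc_eq_rcos a ab(1) by metis
  obtain s where s: "s \<in> carrier G" "u' = H #> s" "e' = J #> s" "v' = (H #> g) #> s"
    using arc_eq_rcos b ab(2) by metis
  have c: "inv t \<otimes> s \<in> carrier G" and tc: "t \<otimes> (inv t \<otimes> s) = s" using s t by simp_all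
  have Hg: "H #> g \<in> Cos_V G H" using rcos_in_Cos_V by simp
  have "X #> t #> (inv t \<otimes> s) = X #> s" if "X \<subseteq> carrier G" for X
    using coset_mult_assoc[OF that t(1) c] tc by simp
  moreover have "u \<in> VE" "e \<in> VE" "v \<in> VE"
    using t rcos_in_Cos_V rcos_in_Cos_E Cos_V_rcos_closed[OF Hg t(1)] by simp_all
  moreover have "H #> g \<subseteq> carrier G" using r_coset_subset_G[OF H.subset g_carrier] .
  ultimately have "(rmult_perm G VE (inv t \<otimes> s) u, rmult_perm G VE (inv t \<otimes> s) e,
      rmult_perm G VE (inv t \<otimes> s) v) = b"
    using t s ab(2) H.subset J.subset by (simp add: rmult_perm_apply)
  then show "\<exists>f\<in>rmult_perm G VE ` carrier G. (case a of (u, e, v) \<Rightarrow> (f u, f e, f v)) = b"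
    unfolding ab(1) using c by (intro bexI[of _ "rmult_perm G VE (inv t \<otimes> s)"] imageI) simp_all
qed

lemma G_arc_transitive: "G_arc_transitive G (Cos_V G H) (Cos_E G J) (Cos_I G H J)"
  unfolding G_arc_transitive_def using arc_transitive .

lemma base_E_eq: "base_E (Cos_V G H) (Cos_E G J) (Cos_I G H J) = {{H #> y, H #> (g \<otimes> y)} | y. y \<in> carrier G}"
  unfolding base_E_def adjacent_iff using rcos_ne_rcos_g by fastforce

lemma reachable_generator:
  assumes h: "h \<in> H \<union> J"
  shows "(H, H #> h) \<in> Adj\<^sup>*"
proof (cases "h \<in> H")
  case True
  then show ?thesis using coset_join2[OF _ H.subgroup_axioms] by simp
next
  case False
  have hc: "h \<in> carrier G" using h by auto
  have "H #> h = H #> g"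
    using False h J_split rcos_eq_iff[OF H.subgroup_axioms hc g_carrier] by auto
  moreover have "adjacent (Cos_V G H) (Cos_E G J) (Cos_I G H J) (H #> \<one>) (H #> (g \<otimes> \<one> \<otimes> \<one>))"
    using adjacent_rcos_iff[OF one_closed] H.one_closed by blast
  ultimately show ?thesis using H.subset by (simp add: r_into_rtrancl)
qed

lemma reachable_if_generate: "x \<in> generate G (H \<union> J) \<Longrightarrow> (H, H #> x) \<in> Adj\<^sup>*"
proof (induction rule: generate.induct)
  case one
  then show ?case using H.subset by simp
next
  case (incl h)
  then show ?case by (rule reachable_generator)
next
  case (inv h)
  then show ?case using reachable_generator by auto
next
  case (eng h1 h2)
  have c: "h1 \<in> carrier G" "h2 \<in> carrier G"
    using eng.hyps generate_in_carrier[of "H \<union> J"] H.subset J.subset by auto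
  have "(H #> h2, (H #> h1) #> h2) \<in> Adj\<^sup>*" using reachable_rcos[OF eng.IH(1) c(2)] .
  then have "(H #> h2, H #> (h1 \<otimes> h2)) \<in> Adj\<^sup>*" using coset_mult_assoc[OF H.subset c] by simp
  with eng.IH(2) show ?case by (rule rtrancl_trans)
qed

lemma generate_if_reachable: "(H, v) \<in> Adj\<^sup>* \<Longrightarrow> \<exists>x\<in>generate G (H \<union> J). v = H #> x"
proof (induction rule: rtrancl_induct)
  case base
  then show ?case using generate.one H.subset by (metis coset_mult_one)
next
  case (step v w)
  then obtain x where x: "x \<in> generate G (H \<union> J)" "v = H #> x" by blast
  have "x \<in> carrier G" using generate_in_carrier[of "H \<union> J"] H.subset J.subset x(1) by auto
  then obtain h where h: "h \<in> H" "w = H #> (g \<otimes> h \<otimes> x)"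
    using step(2) x(2) adjacent_rcos_iff by auto
  have "g \<in> generate G (H \<union> J)" "h \<in> generate G (H \<union> J)"
    using g_in_J h(1) by (auto intro: generate.incl)
  then have "g \<otimes> h \<otimes> x \<in> generate G (H \<union> J)" using x(1) by (intro generate.eng)
  then show ?case using h(2) by blast
qed

lemma connected_iff_generate:
  "connected_graph (Cos_V G H) (Cos_E G J) (Cos_I G H J) \<longleftrightarrow> carrier G = generate G (H \<union> J)"
proof
  assume conn: "connected_graph (Cos_V G H) (Cos_E G J) (Cos_I G H J)"
  show "carrier G = generate G (H \<union> J)"
  proof
    show "generate G (H \<union> J) \<subseteq> carrier G" using generate_incl H.subset J.subset by simp
    show "carrier G \<subseteq> generate G (H \<union> J)"
    proof
      fix a assume a: "a \<in> carrier G"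
      have "(H, H #> a) \<in> Adj\<^sup>*"
        using conn rcos_in_Cos_V[OF a] rcos_in_Cos_V[OF one_closed] H.subset
        unfolding connected_graph_def by (metis coset_mult_one)
      then obtain x where x: "x \<in> generate G (H \<union> J)" "H #> a = H #> x"
        using generate_if_reachable by blast
      have xc: "x \<in> carrier G" using generate_in_carrier[of "H \<union> J"] H.subset J.subset x(1) by auto
      have "a \<otimes> inv x \<in> generate G (H \<union> J)"
        using rcos_eq_iff[OF H.subgroup_axioms a xc] x(2) by (auto intro: generate.incl)
      then have "(a \<otimes> inv x) \<otimes> x \<in> generate G (H \<union> J)" using x(1) by (rule generate.eng)
      then show "a \<in> generate G (H \<union> J)" using a xc by (simp add: m_assoc)
    qed
  qed
next
  assume gen: "carrier G = generate G (H \<union> J)"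
  show "connected_graph (Cos_V G H) (Cos_E G J) (Cos_I G H J)"
    unfolding connected_graph_def
  proof (intro ballI)
    fix u v assume "u \<in> Cos_V G H" "v \<in> Cos_V G H"
    then obtain x y where "x \<in> carrier G" "u = H #> x" "y \<in> carrier G" "v = H #> y"
      unfolding Cos_V_iff by blast
    then have "(H, u) \<in> Adj\<^sup>*" "(H, v) \<in> Adj\<^sup>*" using reachable_if_generate gen by auto
    then show "(u, v) \<in> Adj\<^sup>*" using reachable_sym rtrancl_trans by metis
  qed
qed

lemma ends_image: "ends (Cos_I G H J) ` Cos_E G J = {{H #> y, H #> (g \<otimes> y)} | y. y \<in> carrier G}"
proof
  show "ends (Cos_I G H J) ` Cos_E G J \<subseteq> {{H #> y, H #> (g \<otimes> y)} | y. y \<in> carrier G}"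
  proof
    fix A assume "A \<in> ends (Cos_I G H J) ` Cos_E G J"
    then obtain B where "B \<in> Cos_E G J" "A = ends (Cos_I G H J) B" by blast
    then obtain y where "y \<in> carrier G" "A = ends (Cos_I G H J) (J #> y)" unfolding Cos_E_iff by blast
    then have "A = {H #> y, H #> (g \<otimes> y)}" using ends_rcos by simp
    then show "A \<in> {{H #> y, H #> (g \<otimes> y)} | y. y \<in> carrier G}" using \<open>y \<in> carrier G\<close> by blast
  qed
  show "{{H #> y, H #> (g \<otimes> y)} | y. y \<in> carrier G} \<subseteq> ends (Cos_I G H J) ` Cos_E G J"
  proof
    fix A assume "A \<in> {{H #> y, H #> (g \<otimes> y)} | y. y \<in> carrier G}"
    then obtain y where "y \<in> carrier G" "A = ends (Cos_I G H J) (J #> y)" using ends_rcos by auto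
    then show "A \<in> ends (Cos_I G H J) ` Cos_E G J" using rcos_in_Cos_E by blast
  qed
qed

lemma SimpCos_E_eq: "SimpCos_E G H g = {{H #> y, H #> (g \<otimes> y)} | y. y \<in> carrier G}"
proof (rule Set.set_eqI)
  fix e
  show "e \<in> SimpCos_E G H g \<longleftrightarrow> e \<in> {{H #> y, H #> (g \<otimes> y)} | y. y \<in> carrier G}"
  proof
    assume "e \<in> SimpCos_E G H g"
    then obtain x y h1 h2 where xy: "e = {H #> x, H #> y}" "x \<in> carrier G" "y \<in> carrier G"
      "h1 \<in> H" "h2 \<in> H" "y \<otimes> inv x = h1 \<otimes> g \<otimes> h2"
      unfolding SimpCos_E_def set_mult_def by blast
    have hc: "h1 \<in> carrier G" "h2 \<in> carrier G" using xy(4,5) by simp_all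
    define z where "z = h2 \<otimes> x"
    have z: "z \<in> carrier G" unfolding z_def using hc xy(2) by simp
    have "x \<otimes> inv z = inv h2" unfolding z_def using hc xy(2) by (simp add: inv_mult_group m_assoc)
    then have "H #> x = H #> z" using rcos_eq_iff[OF H.subgroup_axioms xy(2) z] xy(5) by simp
    moreover have "y = h1 \<otimes> g \<otimes> h2 \<otimes> x"
    proof -
      have "y = (y \<otimes> inv x) \<otimes> x" using xy(2,3) by (simp add: m_assoc)
      also have "\<dots> = h1 \<otimes> g \<otimes> h2 \<otimes> x" unfolding xy(6) ..
      finally show ?thesis .
    qed
    then have "y \<otimes> inv (g \<otimes> z) = h1" unfolding z_def using hc xy(2) by (simp add: inv_mult_group m_assoc)
    then have "H #> y = H #> (g \<otimes> z)"
      using rcos_eq_iff[OF H.subgroup_axioms xy(3) m_closed[OF g_carrier z]] xy(4) by simp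
    ultimately show "e \<in> {{H #> y, H #> (g \<otimes> y)} | y. y \<in> carrier G}" using xy(1) z by blast
  next
    assume "e \<in> {{H #> y, H #> (g \<otimes> y)} | y. y \<in> carrier G}"
    then obtain y where y: "y \<in> carrier G" "e = {H #> y, H #> (g \<otimes> y)}" by blast
    have "\<one> \<otimes> g \<in> H <#> {g}" unfolding set_mult_def using H.one_closed by blast
    then have "\<one> \<otimes> g \<otimes> \<one> \<in> (H <#> {g}) <#> H" unfolding set_mult_def using H.one_closed by blast
    moreover have "(g \<otimes> y) \<otimes> inv y = \<one> \<otimes> g \<otimes> \<one>" using y by (simp add: m_assoc)
    ultimately have "(g \<otimes> y) \<otimes> inv y \<in> (H <#> {g}) <#> H" by simp
    then show "e \<in> SimpCos_E G H g"
      unfolding SimpCos_E_def using y by (intro CollectI exI[of _ y] exI[of _ "g \<otimes> y"]) simp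
  qed
qed

end

section \<open>The subgroups \<open>K\<close> and \<open>L\<close>\<close>

locale coset_extender = coset_graph_index2 +
  fixes K L
  assumes K_def: "K = H \<inter> conj_set G H g"
    and L_def: "L = generate G (K \<union> {g})"
begin

lemma mem_K_iff: "z \<in> K \<longleftrightarrow> z \<in> H \<and> g \<otimes> z \<otimes> inv g \<in> H"
  unfolding K_def Int_iff mem_conj_set_iff[OF H.subset g_carrier] using H.mem_carrier by blast

lemma K_subset_H: "K \<subseteq> H"
  unfolding K_def by blast

lemma K_carrier: "z \<in> K \<Longrightarrow> z \<in> carrier G"
  using K_subset_H by auto

lemma H_inter_J_subset_K: "H \<inter> J \<subseteq> K"
proof
  fix h assume h: "h \<in> H \<inter> J"
  have "g \<otimes> h \<otimes> inv g \<in> J" using h g_in_J by simp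
  moreover have "g \<otimes> h \<otimes> inv g \<otimes> inv g \<notin> H"
  proof
    assume "g \<otimes> h \<otimes> inv g \<otimes> inv g \<in> H"
    then have "g \<otimes> h \<otimes> inv g \<otimes> inv g \<otimes> (g \<otimes> g) \<otimes> inv h \<in> H" using h sq_g_in_H by simp
    then show False using h g_notin_H by (simp add: m_assoc)
  qed
  ultimately have "g \<otimes> h \<otimes> inv g \<in> H" using J_split by blast
  then show "h \<in> K" using h unfolding mem_K_iff by blast
qed

lemma subgroup_K: "subgroup K G"
proof (rule subgroupI)
  show "K \<subseteq> carrier G" using K_carrier by blast
  show "K \<noteq> {}" using H_inter_J_subset_K H.one_closed J.one_closed by blast
  fix a b assume a: "a \<in> K" and b: "b \<in> K"
  have "g \<otimes> inv a \<otimes> inv g = inv (g \<otimes> a \<otimes> inv g)"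
    using a K_carrier by (simp add: inv_mult_group m_assoc)
  then show "inv a \<in> K" using a unfolding mem_K_iff by simp
  have "g \<otimes> (a \<otimes> b) \<otimes> inv g = (g \<otimes> a \<otimes> inv g) \<otimes> (g \<otimes> b \<otimes> inv g)"
    using a b K_carrier by (simp add: m_assoc)
  then show "a \<otimes> b \<in> K" using a b unfolding mem_K_iff by simp
qed

interpretation K: subgroup K G by (rule subgroup_K)

lemma sq_g_in_K: "g \<otimes> g \<in> K"
  using sq_g_in_H unfolding mem_K_iff by (simp add: m_assoc)

lemma conj_g_in_K: "z \<in> K \<Longrightarrow> g \<otimes> z \<otimes> inv g \<in> K"
proof -
  assume z: "z \<in> K"
  have "g \<otimes> (g \<otimes> z \<otimes> inv g) \<otimes> inv g = (g \<otimes> g) \<otimes> z \<otimes> inv (g \<otimes> g)"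
    using K_carrier[OF z] by (simp add: m_assoc inv_mult_group)
  also have "\<dots> \<in> H" using z K_subset_H sq_g_in_H by blast
  finally show ?thesis using z unfolding mem_K_iff by simp
qed

lemma conj_inv_g_in_K: "z \<in> K \<Longrightarrow> inv g \<otimes> z \<otimes> g \<in> K"
proof -
  assume z: "z \<in> K"
  have "inv g \<otimes> z \<otimes> g = inv (g \<otimes> g) \<otimes> (g \<otimes> z \<otimes> inv g) \<otimes> (g \<otimes> g)"
    using K_carrier[OF z] by (simp add: m_assoc inv_mult_group)
  then show ?thesis using conj_g_in_K[OF z] sq_g_in_K by simp
qed

lemma mem_rcos_K_g_iff: "z \<in> K #> g \<longleftrightarrow> z \<in> carrier G \<and> z \<otimes> inv g \<in> K"
proof
  assume "z \<in> K #> g"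
  then show "z \<in> carrier G \<and> z \<otimes> inv g \<in> K"
    using r_coset_subset_G[OF K.subset g_carrier] K.rcos_module_imp[OF is_group g_carrier] by blast
qed (simp add: K.rcos_module_rev[OF is_group g_carrier])

lemma inv_mem_K_union_Kg:
  assumes "a \<in> K \<union> (K #> g)"
  shows "inv a \<in> K \<union> (K #> g)"
proof -
  have "a \<in> K \<or> (a \<in> carrier G \<and> a \<otimes> inv g \<in> K)" using assms by (simp add: mem_rcos_K_g_iff)
  then consider "a \<in> K" | "a \<in> carrier G" "a \<otimes> inv g \<in> K" by blast
  then show ?thesis
  proof cases
    case 2
    then have "inv a \<otimes> inv g = (inv g \<otimes> inv (a \<otimes> inv g) \<otimes> g) \<otimes> inv (g \<otimes> g)"
      by (simp add: inv_mult_group m_assoc)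
    also have "\<dots> \<in> K" using conj_inv_g_in_K 2 sq_g_in_K by simp
    finally show ?thesis using 2 by (simp add: mem_rcos_K_g_iff)
  qed simp
qed

lemma mult_mem_K_union_Kg:
  assumes "a \<in> K \<union> (K #> g)" "b \<in> K \<union> (K #> g)"
  shows "a \<otimes> b \<in> K \<union> (K #> g)"
proof -
  have "a \<in> K \<or> (a \<in> carrier G \<and> a \<otimes> inv g \<in> K)" "b \<in> K \<or> (b \<in> carrier G \<and> b \<otimes> inv g \<in> K)"
    using assms by (simp_all add: mem_rcos_K_g_iff)
  then consider "a \<in> K" "b \<in> K" | "a \<in> K" "b \<in> carrier G" "b \<otimes> inv g \<in> K"
    | "a \<in> carrier G" "a \<otimes> inv g \<in> K" "b \<in> K"
    | "a \<in> carrier G" "a \<otimes> inv g \<in> K" "b \<in> carrier G" "b \<otimes> inv g \<in> K"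
    by blast
  then show ?thesis
  proof cases
    case 2
    then have "a \<otimes> b \<otimes> inv g = a \<otimes> (b \<otimes> inv g)" by (simp add: m_assoc)
    then show ?thesis using 2 by (simp add: mem_rcos_K_g_iff)
  next
    case 3
    then have "a \<otimes> b \<otimes> inv g = (a \<otimes> inv g) \<otimes> (g \<otimes> b \<otimes> inv g)" by (simp add: m_assoc)
    then show ?thesis using 3 conj_g_in_K by (simp add: mem_rcos_K_g_iff)
  next
    case 4
    then have "a \<otimes> b = (a \<otimes> inv g) \<otimes> (g \<otimes> (b \<otimes> inv g) \<otimes> inv g) \<otimes> (g \<otimes> g)"
      by (simp add: m_assoc)
    then show ?thesis using 4 conj_g_in_K sq_g_in_K by auto
  qed simp
qed

lemma subgroup_K_union_Kg: "subgroup (K \<union> (K #> g)) G"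
proof (rule subgroupI)
  show "K \<union> (K #> g) \<subseteq> carrier G" using K.subset r_coset_subset_G[OF K.subset g_carrier] by blast
  show "K \<union> (K #> g) \<noteq> {}" using K.one_closed by blast
  show "inv a \<in> K \<union> (K #> g)" if "a \<in> K \<union> (K #> g)" for a
    using that by (rule inv_mem_K_union_Kg)
  show "a \<otimes> b \<in> K \<union> (K #> g)" if "a \<in> K \<union> (K #> g)" "b \<in> K \<union> (K #> g)" for a b
    using that by (rule mult_mem_K_union_Kg)
qed

lemma L_eq: "L = K \<union> (K #> g)"
proof
  show "L \<subseteq> K \<union> (K #> g)"
    unfolding L_def using rcos_self[OF g_carrier K.subgroup_axioms]
    by (intro generate_subgroup_incl[OF _ subgroup_K_union_Kg]) auto
  have "K #> g \<subseteq> L"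
  proof
    fix z assume "z \<in> K #> g"
    then obtain k where "k \<in> K" "z = k \<otimes> g" unfolding r_coset_def by blast
    then show "z \<in> L" unfolding L_def by (auto intro: generate.eng generate.incl)
  qed
  then show "K \<union> (K #> g) \<subseteq> L" unfolding L_def by (auto intro: generate.incl)
qed

lemma subgroup_L: "subgroup L G"
  using subgroup_K_union_Kg L_eq by simp

lemma mem_L_iff: "l \<in> L \<longleftrightarrow> l \<in> carrier G \<and> (l \<in> K \<or> l \<otimes> inv g \<in> K)"
  unfolding L_eq Un_iff mem_rcos_K_g_iff using K_carrier by blast

lemma g_in_L: "g \<in> L"
  unfolding mem_L_iff using K.one_closed by simp

lemma K_subset_L: "K \<subseteq> L"
  unfolding L_eq by blast

lemma H_inter_L: "H \<inter> L = K"
proof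
  show "H \<inter> L \<subseteq> K"
  proof
    fix l assume l: "l \<in> H \<inter> L"
    then have "l \<in> carrier G" "l \<in> K \<or> l \<otimes> inv g \<in> K" using mem_L_iff[of l] by simp_all
    moreover have "l \<otimes> inv g \<notin> K"
    proof
      assume "l \<otimes> inv g \<in> K"
      then have "inv l \<otimes> (l \<otimes> inv g) \<in> H" using l K_subset_H H.m_closed H.m_inv_closed by blast
      then show False using \<open>l \<in> carrier G\<close> inv_g_notin_H by simp
    qed
    ultimately show "l \<in> K" by blast
  qed
  show "K \<subseteq> H \<inter> L" using K_subset_H K_subset_L by blast
qed

lemma J_subset_L: "J \<subseteq> L"
proof
  fix j assume j: "j \<in> J"
  show "j \<in> L"
  proof (cases "j \<in> H")
    case True
    then show ?thesis using j H_inter_J_subset_K K_subset_L by blast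
  next
    case False
    then have "j \<otimes> inv g \<in> H \<inter> J" using J_split j g_in_J by auto
    then show ?thesis using H_inter_J_subset_K j unfolding mem_L_iff by auto
  qed
qed

lemma L_subset: "L \<subseteq> H \<union> (H #> g)"
  unfolding L_eq using K_subset_H unfolding r_coset_def by blast

sublocale L: coset_graph_index2 G H L g
proof (rule coset_graph_index2.intro)
  show "coset_graph G H L"
    unfolding coset_graph_def using is_group H.subgroup_axioms subgroup_L by simp
  show "coset_graph_index2_axioms G H L g"
    using g_in_L g_notin_H L_subset by (simp add: coset_graph_index2_axioms_def)
qed

lemma index_L_K: "idx G L K = 2"
proof -
  have "(\<lambda>l. K #> l) ` L = {K, K #> g}"
  proof
    show "(\<lambda>l. K #> l) ` L \<subseteq> {K, K #> g}"
    proof (rule image_subsetI)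
      fix l assume "l \<in> L"
      then consider "l \<in> K" | "l \<in> carrier G" "l \<otimes> inv g \<in> K" unfolding mem_L_iff by blast
      then show "K #> l \<in> {K, K #> g}"
      proof cases
        case 1 then show ?thesis using coset_join2[OF _ K.subgroup_axioms] by simp
      next
        case 2 then show ?thesis using rcos_eq_iff[OF K.subgroup_axioms _ g_carrier] by simp
      qed
    qed
    show "{K, K #> g} \<subseteq> (\<lambda>l. K #> l) ` L"
      using g_in_L subgroup.one_closed[OF subgroup_L] coset_mult_one[OF K.subset] by (auto intro: image_eqI[of K _ \<one>])
  qed
  moreover have "K \<noteq> K #> g"
    using rcos_self[OF g_carrier K.subgroup_axioms] K_subset_H g_notin_H by auto
  ultimately show ?thesis unfolding idx_def rcosets_restrict_carrier by simp
qed

lemma ends_eq_iff_rcos_L_eq: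
  assumes y: "y \<in> carrier G" and z: "z \<in> carrier G"
  shows "{H #> y, H #> (g \<otimes> y)} = {H #> z, H #> (g \<otimes> z)} \<longleftrightarrow> L #> y = L #> z"
proof
  assume "L #> y = L #> z"
  then have "ends (Cos_I G H L) (L #> y) = ends (Cos_I G H L) (L #> z)" by simp
  then show "{H #> y, H #> (g \<otimes> y)} = {H #> z, H #> (g \<otimes> z)}"
    using L.ends_rcos y z by simp
next
  have gy: "g \<otimes> y \<in> carrier G" and gz: "g \<otimes> z \<in> carrier G" using y z by simp_all
  assume "{H #> y, H #> (g \<otimes> y)} = {H #> z, H #> (g \<otimes> z)}"
  then consider "H #> y = H #> z" "H #> (g \<otimes> y) = H #> (g \<otimes> z)"
    | "H #> y = H #> (g \<otimes> z)" "H #> (g \<otimes> y) = H #> z"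
    by (auto simp: doubleton_eq_iff)
  then have "y \<otimes> inv z \<in> L"
  proof cases
    case 1
    have "y \<otimes> inv z \<in> H" using 1 rcos_eq_iff[OF H.subgroup_axioms y z] by simp
    moreover have "g \<otimes> (y \<otimes> inv z) \<otimes> inv g \<in> H"
      using 1 rcos_eq_iff[OF H.subgroup_axioms gy gz] y z by (simp add: inv_mult_group m_assoc)
    ultimately have "y \<otimes> inv z \<in> K" unfolding mem_K_iff by blast
    then show ?thesis using K_subset_L by blast
  next
    case 2
    have "y \<otimes> inv z \<otimes> inv g \<in> H"
      using 2 rcos_eq_iff[OF H.subgroup_axioms y gz] y z by (simp add: inv_mult_group m_assoc)
    moreover have "g \<otimes> (y \<otimes> inv z \<otimes> inv g) \<otimes> inv g = (g \<otimes> y \<otimes> inv z) \<otimes> inv (g \<otimes> g)"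
      using y z by (simp add: m_assoc inv_mult_group)
    moreover have "g \<otimes> y \<otimes> inv z \<in> H" using 2 rcos_eq_iff[OF H.subgroup_axioms gy z] by simp
    ultimately have "y \<otimes> inv z \<otimes> inv g \<in> K"
      unfolding mem_K_iff using sq_g_in_H H.m_closed H.m_inv_closed by simp
    then show ?thesis using y z unfolding mem_L_iff by simp
  qed
  then show "L #> y = L #> z" using rcos_eq_iff[OF subgroup_L y z] by simp
qed

lemma simple_graph_L: "simple_graph (Cos_V G H) (Cos_E G L) (Cos_I G H L)"
  unfolding simple_graph_def
proof (intro conjI ballI impI)
  show "is_graph (Cos_V G H) (Cos_E G L) (Cos_I G H L)" by (rule L.is_graph)
  fix e e' assume "e \<in> Cos_E G L" "e' \<in> Cos_E G L"
    and ends: "ends (Cos_I G H L) e = ends (Cos_I G H L) e'"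
  then obtain y z where "y \<in> carrier G" "e = L #> y" "z \<in> carrier G" "e' = L #> z"
    unfolding L.Cos_E_iff by blast
  then show "e = e'" using ends L.ends_rcos ends_eq_iff_rcos_L_eq by simp
qed

lemma ends_rcos_J_eq_ends_rcos_L:
  "y \<in> carrier G \<Longrightarrow> ends (Cos_I G H J) (J #> y) = ends (Cos_I G H L) (L #> y)"
  using ends_rcos L.ends_rcos by simp

lemma graph_iso_SimpCos:
  "graph_iso (Cos_V G H) (Cos_E G L) (Cos_I G H L) (Cos_V G H) (SimpCos_E G H g) (SimpCos_I G H g)"
  using graph_iso_ends_if_simple[OF simple_graph_L]
  unfolding SimpCos_I_def SimpCos_E_eq L.ends_image .

lemma graph_iso_base:
  "graph_iso (Cos_V G H) (Cos_E G L) (Cos_I G H L)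
     (Cos_V G H) (base_E (Cos_V G H) (Cos_E G J) (Cos_I G H J)) (base_I (Cos_V G H) (Cos_E G J) (Cos_I G H J))"
  using graph_iso_ends_if_simple[OF simple_graph_L]
  unfolding base_I_def base_E_eq L.ends_image .

lemma simple_graph_iff: "simple_graph (Cos_V G H) (Cos_E G J) (Cos_I G H J) \<longleftrightarrow> L = J"
proof
  assume simple: "simple_graph (Cos_V G H) (Cos_E G J) (Cos_I G H J)"
  show "L = J"
  proof
    show "L \<subseteq> J"
    proof
      fix l assume l: "l \<in> L"
      then have lc: "l \<in> carrier G" by simp
      have "L #> l = L #> \<one>" using rcos_eq_iff[OF subgroup_L lc one_closed] l by simp
      then have "ends (Cos_I G H J) (J #> l) = ends (Cos_I G H J) (J #> \<one>)"
        using ends_rcos_J_eq_ends_rcos_L lc by simp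
      then have "J #> l = J #> \<one>"
        using simple rcos_in_Cos_E lc unfolding simple_graph_def by blast
      then show "l \<in> J" using rcos_eq_iff[OF J.subgroup_axioms lc one_closed] lc by simp
    qed
  qed (rule J_subset_L)
qed (use simple_graph_L in simp)

lemma K_inter_J: "K \<inter> J = H \<inter> J"
  using H_inter_J_subset_K K_subset_H by blast

lemma arc_stabiliser:
  "{x \<in> carrier G. H #> x = H \<and> J #> x = J \<and> (H #> g) #> x = H #> g} = K \<inter> J"
proof -
  have "(H #> g) #> x = H #> g \<longleftrightarrow> g \<otimes> x \<otimes> inv g \<in> H" if x: "x \<in> carrier G" for x
    using coset_mult_assoc[OF H.subset g_carrier x] rcos_eq_iff[OF H.subgroup_axioms m_closed[OF g_carrier x] g_carrier]
    by simp
  then have "{x \<in> carrier G. H #> x = H \<and> J #> x = J \<and> (H #> g) #> x = H #> g}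
      = {x \<in> carrier G. H #> x = H} \<inter> {x \<in> carrier G. J #> x = J} \<inter> {x. g \<otimes> x \<otimes> inv g \<in> H}"
    by blast
  also have "\<dots> = K \<inter> J"
    unfolding rcos_stabiliser[OF H.subgroup_axioms] rcos_stabiliser[OF J.subgroup_axioms]
    by (auto simp: mem_K_iff)
  finally show ?thesis .
qed

lemma rcos_eq_if_rcos_HJ_eq:
  assumes "subgroup S G" "H \<inter> J \<subseteq> S" "a \<in> H" "b \<in> H" "(H \<inter> J) #> a = (H \<inter> J) #> b"
  shows "S #> a = S #> b"
  using rcos_eq_mono[OF subgroups_Inter_pair[OF H.subgroup_axioms J.subgroup_axioms] assms(1,2)] assms(3-5)
  by simp

lemma rcos_g_eq_iff_rcos_K_eq:
  assumes a: "a \<in> H" and b: "b \<in> H" and x: "x \<in> carrier G"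
  shows "H #> (g \<otimes> a \<otimes> x) = H #> (g \<otimes> b \<otimes> x) \<longleftrightarrow> K #> a = K #> b"
proof -
  have ab: "a \<in> carrier G" "b \<in> carrier G" using a b by simp_all
  have "(g \<otimes> a \<otimes> x) \<otimes> inv (g \<otimes> b \<otimes> x) = g \<otimes> (a \<otimes> inv b) \<otimes> inv g"
    using ab x by (simp add: inv_mult_group m_assoc)
  then have "H #> (g \<otimes> a \<otimes> x) = H #> (g \<otimes> b \<otimes> x) \<longleftrightarrow> g \<otimes> (a \<otimes> inv b) \<otimes> inv g \<in> H"
    using rcos_eq_iff[OF H.subgroup_axioms, of "g \<otimes> a \<otimes> x" "g \<otimes> b \<otimes> x"] ab x by simp
  also have "\<dots> \<longleftrightarrow> a \<otimes> inv b \<in> K" unfolding mem_K_iff using a b by simp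
  also have "\<dots> \<longleftrightarrow> K #> a = K #> b" using rcos_eq_iff[OF subgroup_K ab] by simp
  finally show ?thesis .
qed

lemma card_neighbours:
  assumes x: "x \<in> carrier G"
  shows "card (neighbours (Cos_V G H) (Cos_E G J) (Cos_I G H J) (H #> x)) = idx G H K"
  unfolding neighbours_rcos[OF x] idx_def rcosets_restrict_carrier
  by (rule card_image_eq_if_same_fibres) (rule rcos_g_eq_iff_rcos_K_eq[OF _ _ x])

lemma finite_neighbours:
  assumes fin: "finite ((\<lambda>h. (H \<inter> J) #> h) ` H)" and x: "x \<in> carrier G"
  shows "finite (neighbours (Cos_V G H) (Cos_E G J) (Cos_I G H J) (H #> x))"
  unfolding neighbours_rcos[OF x]
proof (rule finite_image_if_factors[OF _ fin])
  fix a b assume ab: "a \<in> H" "b \<in> H" "(H \<inter> J) #> a = (H \<inter> J) #> b"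
  then have "K #> a = K #> b" by (rule rcos_eq_if_rcos_HJ_eq[OF subgroup_K H_inter_J_subset_K])
  then show "H #> (g \<otimes> a \<otimes> x) = H #> (g \<otimes> b \<otimes> x)" using rcos_g_eq_iff_rcos_K_eq[OF ab(1,2) x] by simp
qed

lemma finite_rcos_image_if_HJ_subset:
  assumes fin: "finite ((\<lambda>h. (H \<inter> J) #> h) ` H)" and S: "subgroup S G" "H \<inter> J \<subseteq> S"
  shows "finite ((\<lambda>h. S #> h) ` H)"
proof (rule finite_image_if_factors[OF _ fin])
  fix a b assume "a \<in> H" "b \<in> H" "(H \<inter> J) #> a = (H \<inter> J) #> b"
  then show "S #> a = S #> b" by (rule rcos_eq_if_rcos_HJ_eq[OF S])
qed

lemma locally_finite_J:
  "finite ((\<lambda>h. (H \<inter> J) #> h) ` H) \<Longrightarrow> locally_finite (Cos_V G H) (Cos_E G J) (Cos_I G H J)"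
  using locally_finite_if_finite_index finite_rcos_image_if_HJ_subset[OF _ J.subgroup_axioms Int_lower2] .

lemma locally_finite_L:
  "finite ((\<lambda>h. (H \<inter> J) #> h) ` H) \<Longrightarrow> locally_finite (Cos_V G H) (Cos_E G L) (Cos_I G H L)"
  using L.locally_finite_if_finite_index finite_rcos_image_if_HJ_subset[OF _ subgroup_L] J_subset_L
  by blast

lemma L_mult_rcos_J: "y \<in> carrier G \<Longrightarrow> L <#> (J #> y) = L #> y"
  using setmult_rcos_assoc[OF subgroup.subset[OF subgroup_L] J.subset]
    subgroup_mult_eq_if_subset[OF subgroup_L J.subgroup_axioms J_subset_L] by simp

lemma edges_over_rcos_L:
  assumes y: "y \<in> carrier G"
  shows "{A \<in> Cos_E G J. L <#> A = L #> y} = (\<lambda>l. J #> (l \<otimes> y)) ` L"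
proof (rule Set.set_eqI)
  fix A
  show "A \<in> {A \<in> Cos_E G J. L <#> A = L #> y} \<longleftrightarrow> A \<in> (\<lambda>l. J #> (l \<otimes> y)) ` L"
  proof
    assume "A \<in> {A \<in> Cos_E G J. L <#> A = L #> y}"
    then obtain z where z: "z \<in> carrier G" "A = J #> z" "L #> z = L #> y"
      unfolding Cos_E_iff using L_mult_rcos_J by auto
    then have "z \<otimes> inv y \<in> L" "A = J #> ((z \<otimes> inv y) \<otimes> y)"
      using rcos_eq_iff[OF subgroup_L z(1) y] y by (simp_all add: m_assoc)
    then show "A \<in> (\<lambda>l. J #> (l \<otimes> y)) ` L" by blast
  next
    assume "A \<in> (\<lambda>l. J #> (l \<otimes> y)) ` L"
    then obtain l where l: "l \<in> L" "A = J #> (l \<otimes> y)" by blast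
    then have ly: "l \<otimes> y \<in> carrier G" using subgroup.mem_carrier[OF subgroup_L] y by simp
    have "L #> (l \<otimes> y) = L #> y"
      using rcos_eq_iff[OF subgroup_L ly y] l(1) subgroup.mem_carrier[OF subgroup_L] y by (simp add: m_assoc)
    then show "A \<in> {A \<in> Cos_E G J. L <#> A = L #> y}"
      using l(2) L_mult_rcos_J[OF ly] rcos_in_Cos_E[OF ly] by simp
  qed
qed

lemma rcos_J_image_L: "(\<lambda>l. J #> l) ` L = (\<lambda>k. J #> k) ` K"
proof
  show "(\<lambda>l. J #> l) ` L \<subseteq> (\<lambda>k. J #> k) ` K"
  proof (rule image_subsetI)
    fix l assume "l \<in> L"
    then consider "l \<in> K" | "l \<in> carrier G" "l \<otimes> inv g \<in> K" unfolding mem_L_iff by blast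
    then show "J #> l \<in> (\<lambda>k. J #> k) ` K"
    proof cases
      case 2
      then have "inv g \<otimes> l \<in> K" using conj_inv_g_in_K[OF 2(2)] by (simp add: m_assoc)
      moreover have "J #> l = J #> (inv g \<otimes> l)"
        using rcos_eq_iff[OF J.subgroup_axioms 2(1), of "inv g \<otimes> l"] 2(1) g_in_J
        by (simp add: inv_mult_group m_assoc)
      ultimately show ?thesis by blast
    qed blast
  qed
  show "(\<lambda>k. J #> k) ` K \<subseteq> (\<lambda>l. J #> l) ` L" using K_subset_L by blast
qed

lemma rcos_J_eq_iff_rcos_HJ_eq:
  assumes a: "a \<in> K" and b: "b \<in> K"
  shows "J #> a = J #> b \<longleftrightarrow> (H \<inter> J) #> a = (H \<inter> J) #> b"
proof -
  have "a \<otimes> inv b \<in> H" using a b K_subset_H H.m_closed H.m_inv_closed by blast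
  then show ?thesis
    using rcos_eq_iff[OF J.subgroup_axioms] rcos_eq_iff[OF subgroups_Inter_pair[OF H.subgroup_axioms J.subgroup_axioms]]
      K_carrier[OF a] K_carrier[OF b] by simp
qed

lemma index_L_J: "idx G L J = idx G K (H \<inter> J)"
  unfolding idx_def rcosets_restrict_carrier rcos_J_image_L
  by (rule card_image_eq_if_same_fibres) (rule rcos_J_eq_iff_rcos_HJ_eq)

lemma card_edges_over_rcos_L:
  assumes y: "y \<in> carrier G"
  shows "card {A \<in> Cos_E G J. L <#> A = L #> y} = idx G K (H \<inter> J)"
proof -
  have "card ((\<lambda>l. J #> (l \<otimes> y)) ` L) = card ((\<lambda>l. J #> l) ` L)"
    by (rule card_image_eq_if_same_fibres)
      (use rcos_mult_cancel[OF J.subgroup_axioms _ _ y] subgroup.mem_carrier[OF subgroup_L] in simp)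
  then show ?thesis
    using index_L_J unfolding edges_over_rcos_L[OF y] idx_def rcosets_restrict_carrier by simp
qed

lemma finite_edges_over_rcos_L:
  assumes fin: "finite ((\<lambda>h. (H \<inter> J) #> h) ` H)" and y: "y \<in> carrier G"
  shows "finite {A \<in> Cos_E G J. L <#> A = L #> y}"
proof -
  have "finite ((\<lambda>k. (H \<inter> J) #> k) ` K)"
    using finite_subset[OF image_mono[OF K_subset_H] fin] .
  then have "finite ((\<lambda>l. J #> l) ` L)"
    unfolding rcos_J_image_L by (rule finite_image_if_factors[rotated]) (simp add: rcos_J_eq_iff_rcos_HJ_eq)
  then show ?thesis
    unfolding edges_over_rcos_L[OF y]
    by (rule finite_image_if_factors[rotated])
      (use rcos_mult_cancel[OF J.subgroup_axioms _ _ y] subgroup.mem_carrier[OF subgroup_L] in simp)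
qed

lemma shared_edges_eq:
  assumes "adjacent (Cos_V G H) (Cos_E G J) (Cos_I G H J) u v"
  obtains y where "y \<in> carrier G"
    "shared_edges (Cos_E G J) (Cos_I G H J) u v = {A \<in> Cos_E G J. L <#> A = L #> y}"
proof -
  obtain y where y: "u \<noteq> v" "y \<in> carrier G" "{u, v} = {H #> y, H #> (g \<otimes> y)}"
    using assms unfolding adjacent_iff by blast
  have "A \<in> shared_edges (Cos_E G J) (Cos_I G H J) u v \<longleftrightarrow> L <#> A = L #> y"
    if A: "A \<in> Cos_E G J" for A
  proof -
    obtain z where z: "z \<in> carrier G" "A = J #> z" using A unfolding Cos_E_iff by blast
    have "A \<in> shared_edges (Cos_E G J) (Cos_I G H J) u v \<longleftrightarrow> {u, v} \<subseteq> {H #> z, H #> (g \<otimes> z)}"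
      using A ends_rcos[OF z(1)] unfolding shared_edges_def ends_def z(2) by auto
    also have "\<dots> \<longleftrightarrow> {H #> y, H #> (g \<otimes> y)} = {H #> z, H #> (g \<otimes> z)}"
      using y(1,3) by (auto simp: doubleton_eq_iff)
    also have "\<dots> \<longleftrightarrow> L <#> A = L #> y"
      using ends_eq_iff_rcos_L_eq[OF y(2) z(1)] L_mult_rcos_J[OF z(1)] z(2) by auto
    finally show ?thesis .
  qed
  then have "shared_edges (Cos_E G J) (Cos_I G H J) u v = {A \<in> Cos_E G J. L <#> A = L #> y}"
    unfolding shared_edges_def by blast
  with y(2) show thesis by (rule that)
qed

lemma regular_graph:
  assumes fin: "finite ((\<lambda>h. (H \<inter> J) #> h) ` H)"
  shows "regular_graph (Cos_V G H) (Cos_E G J) (Cos_I G H J) (idx G H K) (idx G K (H \<inter> J))"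
  unfolding regular_graph_def
proof (intro conjI ballI allI impI)
  fix v assume "v \<in> Cos_V G H"
  then obtain x where "x \<in> carrier G" "v = H #> x" unfolding Cos_V_iff by blast
  then show "finite (neighbours (Cos_V G H) (Cos_E G J) (Cos_I G H J) v)"
    and "card (neighbours (Cos_V G H) (Cos_E G J) (Cos_I G H J) v) = idx G H K"
    using finite_neighbours[OF fin] card_neighbours by simp_all
next
  fix u v assume "adjacent (Cos_V G H) (Cos_E G J) (Cos_I G H J) u v"
  then obtain y where "y \<in> carrier G"
    "shared_edges (Cos_E G J) (Cos_I G H J) u v = {A \<in> Cos_E G J. L <#> A = L #> y}"
    by (rule shared_edges_eq)
  then show "finite (shared_edges (Cos_E G J) (Cos_I G H J) u v)"
    and "card (shared_edges (Cos_E G J) (Cos_I G H J) u v) = idx G K (H \<inter> J)"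
    using finite_edges_over_rcos_L[OF fin] card_edges_over_rcos_L by simp_all
qed

lemma graph_iso_extender:
  assumes fin: "finite ((\<lambda>h. (H \<inter> J) #> h) ` H)"
  shows "graph_iso (Cos_V G H) (Cos_E G J) (Cos_I G H J)
    (Cos_V G H) (ext_E (Cos_E G L) (idx G K (H \<inter> J))) (ext_I (Cos_I G H L) (idx G K (H \<inter> J)))"
proof -
  let ?lam = "idx G K (H \<inter> J)"
  have over: "A \<in> Cos_E G J \<Longrightarrow> \<exists>z\<in>carrier G. A = J #> z \<and> L <#> A = L #> z" for A
    unfolding Cos_E_iff using L_mult_rcos_J by auto
  txt \<open>\<open>\<psi>\<close> sends \<open>Jz\<close> to \<open>Lz\<close> together with an index of \<open>Jz\<close> among the cosets of \<open>J\<close> in \<open>Lz\<close>.\<close>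
  obtain \<psi> where \<psi>: "bij_betw \<psi> (Cos_E G J) (Cos_E G L \<times> {..<?lam})"
    and fst_\<psi>: "\<And>A. A \<in> Cos_E G J \<Longrightarrow> fst (\<psi> A) = L <#> A"
  proof (rule bij_betw_times_lessThan_if_fibres)
    show "L <#> A \<in> Cos_E G L" if "A \<in> Cos_E G J" for A
      using over[OF that] L.rcos_in_Cos_E by auto
    show "finite {A \<in> Cos_E G J. L <#> A = B} \<and> card {A \<in> Cos_E G J. L <#> A = B} = ?lam"
      if "B \<in> Cos_E G L" for B
      using that finite_edges_over_rcos_L[OF fin] card_edges_over_rcos_L unfolding L.Cos_E_iff by auto
  qed blast
  have inc: "(v, A) \<in> Cos_I G H J \<longleftrightarrow> (v, \<psi> A) \<in> ext_I (Cos_I G H L) ?lam"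
    if A: "A \<in> Cos_E G J" for v A
  proof -
    obtain z where z: "z \<in> carrier G" "A = J #> z" "L <#> A = L #> z" using over[OF A] by blast
    obtain B i where Bi: "\<psi> A = (B, i)" by (cases "\<psi> A")
    have "B = L #> z" using fst_\<psi>[OF A] z(3) Bi by simp
    moreover have "i < ?lam" using bij_betw_apply[OF \<psi> A] Bi by simp
    moreover have "(v, J #> z) \<in> Cos_I G H J \<longleftrightarrow> (v, L #> z) \<in> Cos_I G H L"
      using ends_rcos_J_eq_ends_rcos_L[OF z(1)] unfolding ends_def by blast
    ultimately have "(v, A) \<in> Cos_I G H J \<longleftrightarrow> (v, B) \<in> Cos_I G H L" "i < ?lam" using z(2) by simp_all
    then show ?thesis unfolding ext_I_def Bi by simp
  qed
  show ?thesis unfolding graph_iso_def ext_E_def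
  proof (intro exI conjI ballI)
    show "bij_betw id (Cos_V G H) (Cos_V G H)" by simp
    show "bij_betw \<psi> (Cos_E G J) (Cos_E G L \<times> {..<?lam})" by (rule \<psi>)
    show "(v, A) \<in> Cos_I G H J \<longleftrightarrow> (id v, \<psi> A) \<in> ext_I (Cos_I G H L) ?lam"
      if "v \<in> Cos_V G H" "A \<in> Cos_E G J" for v A
      using inc[OF that(2)] by simp
  qed
qed

end

theorem theorem2p2:
  fixes G :: "('a, 'b) monoid_scheme" and H J :: "'a set" and g :: 'a
    and K L :: "'a set" and k lam :: nat
  assumes grp: "group G"
    and sH: "subgroup H G" and sJ: "subgroup J G"
    and HG: "H \<noteq> carrier G"
    and idxJ: "idx G J (H \<inter> J) = 2"
    and finH: "finite (rcosets\<^bsub>G\<lparr>carrier := H\<rparr>\<^esub> (H \<inter> J))"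
    and gJ: "g \<in> J" and gH: "g \<notin> H \<inter> J"
    and K_def: "K = H \<inter> conj_set G H g"
    and k_def: "k = idx G H K"
    and lam_def: "lam = idx G K (H \<inter> J)"
    and L_def: "L = generate G (K \<union> {g})"
  shows
    \<comment> \<open>(a)\<close>
    "(is_graph (Cos_V G H) (Cos_E G J) (Cos_I G H J)
      \<and> locally_finite (Cos_V G H) (Cos_E G J) (Cos_I G H J)
      \<and> regular_graph (Cos_V G H) (Cos_E G J) (Cos_I G H J) k lam
      \<and> (connected_graph (Cos_V G H) (Cos_E G J) (Cos_I G H J)
           \<longleftrightarrow> carrier G = generate G (H \<union> J)))
   \<and>
    \<comment> \<open>(b)\<close>
    (subgroup (rmult_perm G (Cos_V G H \<union> Cos_E G J) ` carrier G)
              (BijGroup (Cos_V G H \<union> Cos_E G J))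
      \<and> arc_transitive_on (Cos_V G H) (Cos_E G J) (Cos_I G H J)
              (rmult_perm G (Cos_V G H \<union> Cos_E G J) ` carrier G)
      \<and> (BijGroup (Cos_V G H \<union> Cos_E G J))
              \<lparr>carrier := rmult_perm G (Cos_V G H \<union> Cos_E G J) ` carrier G\<rparr>
          \<cong> G Mod core G (H \<inter> J)
      \<and> {x \<in> carrier G. H #>\<^bsub>G\<^esub> x = H} = H
      \<and> {x \<in> carrier G. J #>\<^bsub>G\<^esub> x = J} = J
      \<and> {x \<in> carrier G. H #>\<^bsub>G\<^esub> x = H \<and> J #>\<^bsub>G\<^esub> x = J
             \<and> (H #>\<^bsub>G\<^esub> g) #>\<^bsub>G\<^esub> x = H #>\<^bsub>G\<^esub> g} = K \<inter> J
      \<and> K \<inter> J = H \<inter> J)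
   \<and>
    \<comment> \<open>(c)\<close>
    (H \<inter> L = K \<and> idx G L K = 2 \<and> J \<subseteq> L \<and> idx G L J = lam
      \<and> simple_graph (Cos_V G H) (Cos_E G L) (Cos_I G H L)
      \<and> locally_finite (Cos_V G H) (Cos_E G L) (Cos_I G H L)
      \<and> graph_iso (Cos_V G H) (Cos_E G L) (Cos_I G H L)
                  (Cos_V G H) (SimpCos_E G H g) (SimpCos_I G H g))
   \<and>
    \<comment> \<open>(d)\<close>
    (graph_iso (Cos_V G H) (Cos_E G L) (Cos_I G H L)
        (Cos_V G H) (base_E (Cos_V G H) (Cos_E G J) (Cos_I G H J))
                    (base_I (Cos_V G H) (Cos_E G J) (Cos_I G H J))
      \<and> G_extender G lam (Cos_V G H) (Cos_E G J) (Cos_I G H J)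
                          (Cos_V G H) (Cos_E G L) (Cos_I G H L)
      \<and> (simple_graph (Cos_V G H) (Cos_E G J) (Cos_I G H J) \<longleftrightarrow> L = J))"
proof -
  interpret coset_extender G H J g K L
  proof (intro coset_extender.intro coset_graph_index2.intro coset_extender_axioms.intro
      coset_graph_index2_axioms.intro)
    show "coset_graph G H J" unfolding coset_graph_def using grp sH sJ by simp
    show "J \<subseteq> H \<union> (H #>\<^bsub>G\<^esub> g)"
      using group.index_two_subset_Un_rcos[OF grp sH sJ idxJ gJ] gJ gH by blast
  qed (use gJ gH K_def L_def in auto)
  have fin: "finite ((\<lambda>h. (H \<inter> J) #>\<^bsub>G\<^esub> h) ` H)"
    using finH unfolding rcosets_restrict_carrier .
  show ?thesis
    unfolding k_def lam_def G_extender_def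
    using is_graph locally_finite_J[OF fin] regular_graph[OF fin] connected_iff_generate
      subgroup_rmult_perms arc_transitive rmult_perms_iso_quotient
      rcos_stabiliser[OF sH] rcos_stabiliser[OF sJ] arc_stabiliser K_inter_J
      H_inter_L index_L_K J_subset_L index_L_J simple_graph_L locally_finite_L[OF fin]
      graph_iso_SimpCos graph_iso_base graph_iso_extender[OF fin]
      G_arc_transitive L.G_arc_transitive simple_graph_iff
    by simp
qed

end
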